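(* Let $\rho\in\mathbb S^m(\mathbb R^n;\mathscr A_\theta)$, $m\in\mathbb R$. For every $s\in\mathbb R$, the operator $P_\rho$ extends uniquely to a continuous linear map $P_\rho:\mathcal H^{(s+m)}_\theta\to\mathcal H^{(s)}_\theta$. Moreover, $\rho\mapsto P_\rho$ is a continuous linear map from $\mathbb S^m(\mathbb R^n;\mathscr A_\theta)$ to $\mathscr L(\mathcal H^{(s+m)}_\theta,\mathcal H^{(s)}_\theta)$ (bounded operators with the operator norm topology).
   Context: Fix $n\ge 2$ and a real antisymmetric $n\times n$ matrix $\theta$. The noncommutative torus $A_\theta$ is the $C^*$-algebra generated by unitaries $U_1,\dots,U_n$ with $U_kU_j=e^{2i\pi\theta_{jk}}U_jU_k$; $U^k=U_1^{k_1}\cdots U_n^{k_n}$; $\|\cdot\|$ is the $C^*$-norm; $\tau$ is the continuous trace with $\tau(U^0)=1$, $\tau(U^k)=0$ for $k\ne0$. $\mathbb R^n$ acts by $*$-automorphisms $\alpha_s$ with $\alpha_s(U^k)=e^{is\cdot k}U^k$. $\mathscr A_\theta$ is the set of $u\in A_\theta$ with $s\mapsto\alpha_s(u)$ smooth, equivalently the sums $\sum u_kU^k$ with $(u_k)$ rapidly decreasing; $\delta_j(u)=-i\,\partial_{s_j}\alpha_s(u)|_{s=0}$, $\delta^\alpha=\delta_1^{\alpha_1}\cdots\delta_n^{\alpha_n}$; it is a Fréchet algebra for the seminorms $u\mapsto\|\delta^\alpha u\|$. $\mathscr A_\theta'$ is the strong dual of $\mathscr A_\theta$, containing $\mathscr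 A_\theta$ via $\langle u,v\rangle=\tau(uv)$; $u\in\mathscr A_\theta'$ has Fourier coefficients $u_k=\langle u,(U^k)^*\rangle$. $\mathcal H^{(s)}_\theta=\{u\in\mathscr A_\theta':\sum_k(1+|k|^2)^s|u_k|^2<\infty\}$ with norm $\|u\|_s=\big(\sum_k(1+|k|^2)^s|u_k|^2\big)^{1/2}$; $\mathscr A_\theta$ is dense in it. $\mathbb S^m(\mathbb R^n;\mathscr A_\theta)$ is the space of smooth $\rho:\mathbb R^n\to\mathscr A_\theta$ with $\|\delta^\alpha\partial_\xi^\beta\rho(\xi)\|\le C_{\alpha\beta}(1+|\xi|)^{m-|\beta|}$, Fréchet for the seminorms $p^{(m)}_N(\rho)=\sup_{|\alpha|+|\beta|\le N}\sup_\xi(1+|\xi|)^{-m+|\beta|}\|\delta^\alpha\partial_\xi^\beta\rho(\xi)\|$. $P_\rho:\mathscr A_\theta\to\mathscr A_\theta$ is the pseudodifferential operator $P_\rho u=\iint e^{is\cdot\xi}\rho(\xi)\alpha_{-s}(u)\,ds\,(2\pi)^{-n}d\xi$ (oscillating integral); concretely $P_\rho\big(\sum_ku_kU^k\big)=\sum_ku_k\rho(k)U^k$. *)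

theory Defs
  imports "HOL-Analysis.Analysis"
begin

text \<open>Concrete model of the smooth noncommutative torus.  The dimension n is the
cardinality of the finite, linearly ordered index type 'n.  An element
u = sum_k u_k U^k is represented by its Fourier coefficient function
int^'n => complex (u_k = tau(u (U^k)^*)).\<close>

type_synonym 'n coeff = "int ^ 'n \<Rightarrow> complex"

definition ivec :: "int ^ ('n::{finite,linorder}) \<Rightarrow> real ^ ('n::{finite,linorder})" where
  "ivec k = (\<chi> i. real_of_int (k $ i))"

definition knorm :: "int ^ ('n::{finite,linorder}) \<Rightarrow> real" where
  "knorm k = norm (ivec k)"

definition antisym_mat :: "real ^ ('n::{finite,linorder}) ^ ('n::{finite,linorder}) \<Rightarrow> bool" where
  "antisym_mat \<theta> \<longleftrightarrow> (\<forall>i j. \<theta> $ i $ j = - (\<theta> $ j $ i))"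

text \<open>Phase: U^k U^l = phase k l * U^(k+l), where U^k = U_1^k_1 ... U_n^k_n and
U_i U_j = exp(2 pi i theta_ji) U_j U_i.\<close>
definition phase :: "real ^ ('n::{finite,linorder}) ^ ('n::{finite,linorder}) \<Rightarrow> int ^ ('n::{finite,linorder}) \<Rightarrow> int ^ ('n::{finite,linorder}) \<Rightarrow> complex" where
  "phase \<theta> k l = cis (2 * pi * (\<Sum>(j,i) \<in> {(j,i). j < i}.
        \<theta> $ j $ i * real_of_int (k $ i) * real_of_int (l $ j)))"

text \<open>Product in A_theta on coefficients (twisted convolution).\<close>
definition tprod :: "real ^ ('n::{finite,linorder}) ^ ('n::{finite,linorder}) \<Rightarrow> ('n::{finite,linorder}) coeff \<Rightarrow> ('n::{finite,linorder}) coeff \<Rightarrow> ('n::{finite,linorder}) coeff" where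
  "tprod \<theta> u v = (\<lambda>p. infsum (\<lambda>k. u k * v (p - k) * phase \<theta> k (p - k)) UNIV)"

definition l2norm :: "('n::{finite,linorder}) coeff \<Rightarrow> real" where
  "l2norm \<xi> = sqrt (infsum (\<lambda>k. (norm (\<xi> k))\<^sup>2) UNIV)"

text \<open>C*-norm, computed in the GNS representation of the faithful trace tau
(left regular representation on l^2(Z^n) = L^2(A_theta, tau)).\<close>
definition cnorm :: "real ^ ('n::{finite,linorder}) ^ ('n::{finite,linorder}) \<Rightarrow> ('n::{finite,linorder}) coeff \<Rightarrow> real" where
  "cnorm \<theta> u = (SUP \<xi> \<in> {\<xi>. finite {k. \<xi> k \<noteq> 0} \<and> l2norm \<xi> \<le> 1}. l2norm (tprod \<theta> u \<xi>))"

text \<open>Smooth elements: rapidly decreasing coefficient families.\<close>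
definition Asm :: "('n::{finite,linorder}) coeff set" where
  "Asm = {u. \<forall>N::nat. \<exists>C. \<forall>k. norm (u k) * (1 + knorm k) ^ N \<le> C}"

text \<open>delta^alpha, with delta_j(U^k) = k_j U^k.\<close>
definition delta :: "nat ^ ('n::{finite,linorder}) \<Rightarrow> ('n::{finite,linorder}) coeff \<Rightarrow> ('n::{finite,linorder}) coeff" where
  "delta \<alpha> u = (\<lambda>k. (\<Prod>i\<in>UNIV. (of_int (k $ i)) ^ (\<alpha> $ i)) * u k)"

definition mlen :: "nat ^ ('n::{finite,linorder}) \<Rightarrow> nat" where
  "mlen \<alpha> = (\<Sum>i\<in>UNIV. \<alpha> $ i)"

text \<open>D is the family of all iterated partial derivatives (D beta = partial_xi^beta rho),
taken in the Frechet topology of the smooth algebra (seminorms u -> norm(delta^alpha u)).\<close>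
definition smooth_family ::
  "real ^ ('n::{finite,linorder}) ^ ('n::{finite,linorder}) \<Rightarrow> (real ^ ('n::{finite,linorder}) \<Rightarrow> ('n::{finite,linorder}) coeff) \<Rightarrow> (nat ^ ('n::{finite,linorder}) \<Rightarrow> real ^ ('n::{finite,linorder}) \<Rightarrow> ('n::{finite,linorder}) coeff) \<Rightarrow> bool" where
  "smooth_family \<theta> \<rho> D \<longleftrightarrow>
     D 0 = \<rho> \<and>
     (\<forall>\<beta> \<xi>. D \<beta> \<xi> \<in> Asm) \<and>
     (\<forall>\<beta> \<xi> \<alpha>. ((\<lambda>\<eta>. cnorm \<theta> (delta \<alpha> (\<lambda>k. D \<beta> \<eta> k - D \<beta> \<xi> k))) \<longlongrightarrow> 0) (at \<xi>)) \<and>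
     (\<forall>\<beta> \<xi> \<alpha> j. ((\<lambda>h. cnorm \<theta> (delta \<alpha>
          (\<lambda>k. (D \<beta> (\<xi> + h *\<^sub>R axis j 1) k - D \<beta> \<xi> k) / complex_of_real h
                 - D (\<beta> + axis j 1) \<xi> k))) \<longlongrightarrow> 0) (at 0))"

definition symbol_class :: "real ^ ('n::{finite,linorder}) ^ ('n::{finite,linorder}) \<Rightarrow> real \<Rightarrow> (real ^ ('n::{finite,linorder}) \<Rightarrow> ('n::{finite,linorder}) coeff) set" where
  "symbol_class \<theta> m = {\<rho>. \<exists>D. smooth_family \<theta> \<rho> D \<and>
     (\<forall>\<alpha> \<beta>. \<exists>C. \<forall>\<xi>. cnorm \<theta> (delta \<alpha> (D \<beta> \<xi>)) \<le> C * (1 + norm \<xi>) powr (m - real (mlen \<beta>)))}"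

definition symD :: "real ^ ('n::{finite,linorder}) ^ ('n::{finite,linorder}) \<Rightarrow> (real ^ ('n::{finite,linorder}) \<Rightarrow> ('n::{finite,linorder}) coeff) \<Rightarrow> nat ^ ('n::{finite,linorder}) \<Rightarrow> real ^ ('n::{finite,linorder}) \<Rightarrow> ('n::{finite,linorder}) coeff" where
  "symD \<theta> \<rho> = (SOME D. smooth_family \<theta> \<rho> D)"

definition symb_seminorm :: "real ^ ('n::{finite,linorder}) ^ ('n::{finite,linorder}) \<Rightarrow> real \<Rightarrow> nat \<Rightarrow> (real ^ ('n::{finite,linorder}) \<Rightarrow> ('n::{finite,linorder}) coeff) \<Rightarrow> real" where
  "symb_seminorm \<theta> m N \<rho> =
     (SUP (\<alpha>, \<beta>, \<xi>) \<in> {(\<alpha>, \<beta>, \<xi>). mlen \<alpha> + mlen \<beta> \<le> N}.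
        (1 + norm \<xi>) powr (real (mlen \<beta>) - m) * cnorm \<theta> (delta \<alpha> (symD \<theta> \<rho> \<beta> \<xi>)))"

text \<open>P_rho (sum_k u_k U^k) = sum_k u_k rho(k) U^k, with U^k the coefficient family
indicator of k.\<close>
definition Pop :: "real ^ ('n::{finite,linorder}) ^ ('n::{finite,linorder}) \<Rightarrow> (real ^ ('n::{finite,linorder}) \<Rightarrow> ('n::{finite,linorder}) coeff) \<Rightarrow> ('n::{finite,linorder}) coeff \<Rightarrow> ('n::{finite,linorder}) coeff" where
  "Pop \<theta> \<rho> u = (\<lambda>l. infsum (\<lambda>k. u k * tprod \<theta> (\<rho> (ivec k)) (\<lambda>p. if p = k then 1 else 0) l) UNIV)"

text \<open>Sobolev spaces, via Fourier coefficients of distributions.\<close>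
definition sob_weight :: "real \<Rightarrow> ('n::{finite,linorder}) coeff \<Rightarrow> int ^ ('n::{finite,linorder}) \<Rightarrow> real" where
  "sob_weight s u k = (1 + (knorm k)\<^sup>2) powr s * (norm (u k))\<^sup>2"

definition Hsob :: "real \<Rightarrow> ('n::{finite,linorder}) coeff set" where
  "Hsob s = {u. sob_weight s u summable_on UNIV}"

definition sobnorm :: "real \<Rightarrow> ('n::{finite,linorder}) coeff \<Rightarrow> real" where
  "sobnorm s u = sqrt (infsum (sob_weight s u) UNIV)"

definition is_ext :: "real ^ ('n::{finite,linorder}) ^ ('n::{finite,linorder}) \<Rightarrow> (real ^ ('n::{finite,linorder}) \<Rightarrow> ('n::{finite,linorder}) coeff) \<Rightarrow> real \<Rightarrow> real
     \<Rightarrow> (('n::{finite,linorder}) coeff \<Rightarrow> ('n::{finite,linorder}) coeff) \<Rightarrow> bool" where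
  "is_ext \<theta> \<rho> s m T \<longleftrightarrow>
     (\<forall>u \<in> Hsob (s + m). T u \<in> Hsob s) \<and>
     (\<forall>u \<in> Hsob (s + m). \<forall>v \<in> Hsob (s + m). \<forall>a b :: complex.
        T (\<lambda>k. a * u k + b * v k) = (\<lambda>k. a * T u k + b * T v k)) \<and>
     (\<exists>C. \<forall>u \<in> Hsob (s + m). sobnorm s (T u) \<le> C * sobnorm (s + m) u) \<and>
     (\<forall>u \<in> Asm. T u = Pop \<theta> \<rho> u)"

end

theory Submission
  imports Defs
begin

text \<open>The l-th Fourier coefficient of P_\<rho> u is the sum over k of u_k \<rho>(k)_(l-k), up to a
  phase.  As the C*-norm dominates every Fourier coefficient, applying \<delta>^\<alpha> to the symbol gives
  |\<rho>(\<xi>)_j| \<le> C p_N(\<rho>) (1 + |\<xi>|)^m <j>^(-N), where <j>^2 = kweight j.  Peetre's inequality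
  <l>^s \<le> 2^|s| <k>^s <l - k>^|s| then dominates the weighted kernel by the convolution of
  <j>^(|s| - N), summable for N \<ge> |s| + 2n, with the square-summable <k>^(s+m) |u_k|, and
  Young's inequality gives |P_\<rho> u|_s \<le> C p_N(\<rho>) |u|_(s+m).  A continuous extension is
  determined by its values on finitely supported u, which are dense in H^(s+m); this gives
  uniqueness, and linearity in \<rho>.\<close>

section \<open>Sums over discrete groups and Young's inequality\<close>

lemma nonneg_bounded_sums_summable_on:
  fixes f :: "'a \<Rightarrow> real"
  assumes "\<And>x. f x \<ge> 0" and "\<And>F. finite F \<Longrightarrow> sum f F \<le> B"
  shows "f summable_on UNIV" and "infsum f UNIV \<le> B"
proof -
  show summable: "f summable_on UNIV"
    by (rule nonneg_bdd_above_summable_on) (use assms in \<open>auto intro!: bdd_aboveI2\<close>)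
  show "infsum f UNIV \<le> B"
    by (rule infsum_le_finite_sums[OF summable]) (use assms in auto)
qed

lemma single_le_infsum:
  fixes f :: "'a \<Rightarrow> real"
  assumes "f summable_on UNIV" and "\<And>x. f x \<ge> 0"
  shows "f x \<le> infsum f UNIV"
  using finite_sum_le_infsum[OF assms(1), of "{x}"] assms(2) by auto

lemma bij_diff_left: "bij (\<lambda>k::'a::ab_group_add. l - k)"
  by (rule bij_betwI[of _ _ _ "\<lambda>k. l - k"]) auto

lemma has_sum_reflect:
  fixes g :: "'a::ab_group_add \<Rightarrow> 'b::{comm_monoid_add,topological_space}"
  shows "((\<lambda>k. g (l - k)) has_sum G) UNIV \<longleftrightarrow> (g has_sum G) UNIV"
  using has_sum_reindex_bij_betw[OF bij_diff_left, where f=g and S=G] by simp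

lemma infsum_reflect:
  fixes f :: "'a::ab_group_add \<Rightarrow> 'b::{comm_monoid_add,t2_space}"
  shows "infsum (\<lambda>k. f (l - k)) UNIV = infsum f UNIV"
  using infsum_reindex_bij_betw[OF bij_diff_left, where f=f] by simp

lemma sum_shifted_le_infsum:
  fixes g :: "'a::ab_group_add \<Rightarrow> real"
  assumes "\<And>x. g x \<ge> 0" and "g summable_on UNIV" and "finite L"
  shows "(\<Sum>l\<in>L. g (l - k)) \<le> infsum g UNIV"
proof -
  have "(\<Sum>l\<in>L. g (l - k)) = sum g ((\<lambda>l. l - k) ` L)"
    by (simp add: sum.reindex inj_on_def)
  also have "\<dots> \<le> infsum g UNIV"
    using finite_sum_le_infsum[OF assms(2)] assms(1,3) by auto
  finally show ?thesis .
qed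

lemma has_sum_sum:
  fixes f :: "'i \<Rightarrow> 'a \<Rightarrow> 'b::topological_comm_monoid_add"
  assumes "finite I" and "\<And>i. i \<in> I \<Longrightarrow> (f i has_sum s i) A"
  shows "((\<lambda>x. \<Sum>i\<in>I. f i x) has_sum (\<Sum>i\<in>I. s i)) A"
  using assms by (induction I rule: finite_induct) (auto intro!: has_sum_add)

text \<open>Cauchy--Schwarz with the weights \<open>g (l - k)\<close> split evenly between the two factors.\<close>

lemma convolution_square_le:
  fixes g v :: "'a::ab_group_add \<Rightarrow> real"
  assumes g: "\<And>x. g x \<ge> 0" "g summable_on UNIV" and v: "\<And>x. v x \<ge> 0"
    and gv: "(\<lambda>k. g (l - k) * v k) summable_on UNIV"
    and gv2: "(\<lambda>k. g (l - k) * (v k)\<^sup>2) summable_on UNIV"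
  shows "(infsum (\<lambda>k. g (l - k) * v k) UNIV)\<^sup>2
           \<le> infsum g UNIV * infsum (\<lambda>k. g (l - k) * (v k)\<^sup>2) UNIV"
proof -
  define G where "G = infsum g UNIV"
  define S where "S = infsum (\<lambda>k. g (l - k) * (v k)\<^sup>2) UNIV"
  have G: "((\<lambda>k. g (l - k)) has_sum G) UNIV"
    using g(2) by (simp add: has_sum_reflect G_def)
  have "infsum (\<lambda>k. g (l - k) * v k) UNIV \<le> sqrt (G * S)"
  proof (rule infsum_le_finite_sums[OF gv])
    fix F :: "'a set" assume F: "finite F"
    have "(\<Sum>k\<in>F. g (l - k) * v k) = (\<Sum>k\<in>F. sqrt (g (l - k)) * (sqrt (g (l - k)) * v k))"
      by (intro sum.cong) (auto simp: g(1) mult.assoc[symmetric])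
    also have "\<dots> \<le> sqrt ((\<Sum>k\<in>F. (sqrt (g (l - k)))\<^sup>2) * (\<Sum>k\<in>F. (sqrt (g (l - k)) * v k)\<^sup>2))"
      by (rule real_le_rsqrt, rule Cauchy_Schwarz_ineq_sum)
    also have "\<dots> = sqrt ((\<Sum>k\<in>F. g (l - k)) * (\<Sum>k\<in>F. g (l - k) * (v k)\<^sup>2))"
      by (simp add: g(1) power_mult_distrib)
    also have "\<dots> \<le> sqrt (G * S)"
      using finite_sum_le_has_sum[OF G F] finite_sum_le_infsum[OF gv2 F]
      by (intro real_sqrt_le_mono mult_mono)
         (auto simp: S_def g(1) intro!: sum_nonneg has_sum_nonneg[OF G])
    finally show "(\<Sum>k\<in>F. g (l - k) * v k) \<le> sqrt (G * S)" .
  qed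
  moreover have "0 \<le> infsum (\<lambda>k. g (l - k) * v k) UNIV"
    by (intro infsum_nonneg) (simp add: g(1) v)
  moreover have "0 \<le> G * S"
    unfolding G_def S_def by (intro mult_nonneg_nonneg infsum_nonneg) (auto simp: g(1))
  ultimately show ?thesis
    unfolding G_def[symmetric] S_def[symmetric] by (metis power_mono real_sqrt_pow2)
qed

lemma young_l1_l2:
  fixes g v :: "'a::ab_group_add \<Rightarrow> real"
  assumes g: "\<And>x. g x \<ge> 0" "g summable_on UNIV"
    and v: "\<And>x. v x \<ge> 0" "(\<lambda>x. (v x)\<^sup>2) summable_on UNIV"
  shows "(\<lambda>k. g (l - k) * v k) summable_on UNIV"
    and "(\<lambda>l. (infsum (\<lambda>k. g (l - k) * v k) UNIV)\<^sup>2) summable_on UNIV"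
    and "infsum (\<lambda>l. (infsum (\<lambda>k. g (l - k) * v k) UNIV)\<^sup>2) UNIV
           \<le> (infsum g UNIV)\<^sup>2 * infsum (\<lambda>x. (v x)\<^sup>2) UNIV"
proof -
  define G where "G = infsum g UNIV"
  define V where "V = infsum (\<lambda>x. (v x)\<^sup>2) UNIV"
  have G: "((\<lambda>k. g (l - k)) has_sum G) UNIV" for l
    using g(2) by (simp add: has_sum_reflect G_def)
  have vV: "v x \<le> sqrt V" "(v x)\<^sup>2 \<le> V" for x
    using single_le_infsum[OF v(2)] v(1) by (auto simp: V_def real_le_rsqrt)
  have gv: "(\<lambda>k. g (l - k) * v k) summable_on UNIV" for l
    using summable_on_cmult_left[OF has_sum_imp_summable[OF G], where c="sqrt V"]
    by (rule summable_on_comparison_test) (auto intro!: mult_left_mono mult_nonneg_nonneg vV g(1) v(1))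
  then show "(\<lambda>k. g (l - k) * v k) summable_on UNIV" .
  define S where "S l = infsum (\<lambda>k. g (l - k) * (v k)\<^sup>2) UNIV" for l
  have "(\<lambda>k. g (l - k) * (v k)\<^sup>2) summable_on UNIV" for l
    using summable_on_cmult_left[OF has_sum_imp_summable[OF G], where c=V]
    by (rule summable_on_comparison_test) (auto intro!: mult_left_mono mult_nonneg_nonneg vV g(1))
  then have gv2: "((\<lambda>k. g (l - k) * (v k)\<^sup>2) has_sum S l) UNIV" for l
    by (simp add: S_def)
  have "(\<Sum>l\<in>L. (infsum (\<lambda>k. g (l - k) * v k) UNIV)\<^sup>2) \<le> G\<^sup>2 * V" if L: "finite L" for L
  proof -
    have sumL: "((\<lambda>k. (\<Sum>l\<in>L. g (l - k)) * (v k)\<^sup>2) has_sum (\<Sum>l\<in>L. S l)) UNIV"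
      using has_sum_sum[OF L gv2] by (simp add: sum_distrib_right)
    have "(\<Sum>l\<in>L. g (l - k)) * (v k)\<^sup>2 \<le> G * (v k)\<^sup>2" for k
      unfolding G_def using sum_shifted_le_infsum[OF g L] by (simp add: mult_right_mono)
    then have SV: "(\<Sum>l\<in>L. S l) \<le> G * V"
      unfolding V_def by (rule has_sum_mono[OF sumL has_sum_cmult_right[OF has_sum_infsum[OF v(2)]]])
    have G0: "G \<ge> 0"
      unfolding G_def by (intro infsum_nonneg g(1))
    have "(\<Sum>l\<in>L. (infsum (\<lambda>k. g (l - k) * v k) UNIV)\<^sup>2) \<le> (\<Sum>l\<in>L. G * S l)"
      using convolution_square_le[OF g v(1) gv has_sum_imp_summable[OF gv2]]
      by (intro sum_mono) (simp add: G_def S_def)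
    also have "\<dots> \<le> G * (G * V)"
      using SV G0 by (simp add: sum_distrib_left[symmetric] mult_left_mono)
    finally show ?thesis
      by (simp add: power2_eq_square mult.assoc)
  qed
  then show "(\<lambda>l. (infsum (\<lambda>k. g (l - k) * v k) UNIV)\<^sup>2) summable_on UNIV"
    and "infsum (\<lambda>l. (infsum (\<lambda>k. g (l - k) * v k) UNIV)\<^sup>2) UNIV
           \<le> (infsum g UNIV)\<^sup>2 * infsum (\<lambda>x. (v x)\<^sup>2) UNIV"
    using nonneg_bounded_sums_summable_on[of "\<lambda>l. (infsum (\<lambda>k. g (l - k) * v k) UNIV)\<^sup>2"]
    by (auto simp: G_def V_def)
qed

section \<open>The lattice weight\<close>

definition kweight :: "int ^ ('n::{finite,linorder}) \<Rightarrow> real" where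
  "kweight k = 1 + (knorm k)\<^sup>2"

lemma knorm_nonneg: "knorm k \<ge> 0"
  by (simp add: knorm_def)

lemma ivec_diff: "ivec (a - b) = ivec a - ivec b"
  by (simp add: ivec_def vec_eq_iff)

lemma knorm_diff_le: "knorm (a - b) \<le> knorm a + knorm b"
  unfolding knorm_def ivec_diff by (rule norm_triangle_ineq4)

lemma knorm_minus_commute: "knorm (a - b) = knorm (b - a)"
  unfolding knorm_def ivec_diff by (rule norm_minus_commute)

lemma abs_component_le_knorm: "\<bar>real_of_int (k $ i)\<bar> \<le> knorm k"
  unfolding knorm_def using component_le_norm_cart[of "ivec k" i] by (simp add: ivec_def)

lemma knorm_le_sum_abs: "knorm k \<le> (\<Sum>i\<in>UNIV. \<bar>real_of_int (k $ i)\<bar>)"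
  unfolding knorm_def using norm_le_l1_cart[of "ivec k"] by (simp add: ivec_def)

lemma kweight_ge_one: "kweight k \<ge> 1"
  by (simp add: kweight_def)

lemma kweight_pos: "kweight k > 0"
  using kweight_ge_one[of k] by simp

lemma sob_weight_kweight: "sob_weight s u k = kweight k powr s * (norm (u k))\<^sup>2"
  by (simp add: sob_weight_def kweight_def)

lemma kweight_diff_le: "kweight (a - b) \<le> 2 * kweight a * kweight b"
proof -
  have "(knorm (a - b))\<^sup>2 \<le> (knorm a + knorm b)\<^sup>2"
    using knorm_diff_le knorm_nonneg by (intro power_mono) auto
  also have "\<dots> \<le> 2 * (knorm a)\<^sup>2 + 2 * (knorm b)\<^sup>2"
    using sum_squares_bound[of "knorm a" "knorm b"] by (simp add: power2_eq_square algebra_simps)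
  finally have "(knorm (a - b))\<^sup>2 \<le> 2 * (knorm a)\<^sup>2 + 2 * (knorm b)\<^sup>2" .
  moreover have "2 * kweight a * kweight b
      = 2 + 2 * (knorm a)\<^sup>2 + 2 * (knorm b)\<^sup>2 + 2 * ((knorm a)\<^sup>2 * (knorm b)\<^sup>2)"
    by (simp add: kweight_def algebra_simps)
  moreover have "0 \<le> (knorm a)\<^sup>2 * (knorm b)\<^sup>2"
    by simp
  ultimately show ?thesis
    unfolding kweight_def by linarith
qed

lemma kweight_add_le: "kweight (a + b) \<le> 2 * kweight a * kweight b"
proof -
  have "kweight (- b) = kweight b"
    using knorm_minus_commute[of 0 b] by (simp add: kweight_def)
  then show ?thesis
    using kweight_diff_le[of a "- b"] by simp
qed

lemma peetre_inequality:
  "kweight l powr t \<le> 2 powr \<bar>t\<bar> * kweight k powr t * kweight (l - k) powr \<bar>t\<bar>"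
proof (cases "t \<ge> 0")
  case True
  have "kweight l \<le> 2 * kweight k * kweight (l - k)"
    using kweight_add_le[of k "l - k"] by simp
  then have "kweight l powr t \<le> (2 * kweight k * kweight (l - k)) powr t"
    using True kweight_pos[of l] by (intro powr_mono2) auto
  then show ?thesis
    using True by (simp add: powr_mult)
next
  case False
  have "kweight k \<le> 2 * kweight l * kweight (l - k)"
    using kweight_diff_le[of l "l - k"] by simp
  then have "kweight k powr (- t) \<le> (2 * kweight l * kweight (l - k)) powr (- t)"
    using False kweight_pos[of k] by (intro powr_mono2) auto
  then have "inverse (kweight k powr t)
      \<le> 2 powr (- t) * inverse (kweight l powr t) * kweight (l - k) powr (- t)"
    by (simp add: powr_mult powr_minus)
  then show ?thesis
    using False kweight_pos[of k] kweight_pos[of l] by (simp add: field_simps)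
qed

lemma kweight_powr_half_le: "c \<ge> 0 \<Longrightarrow> kweight k powr (c / 2) \<le> (1 + knorm k) powr c"
proof -
  assume c: "c \<ge> 0"
  have "kweight k powr (c / 2) \<le> ((1 + knorm k) powr 2) powr (c / 2)"
    using c knorm_nonneg[of k] kweight_pos[of k]
    by (intro powr_mono2) (auto simp: kweight_def power2_eq_square algebra_simps)
  then show ?thesis
    by (simp add: powr_powr)
qed

lemma one_plus_knorm_powr_le: "(1 + knorm k) powr m \<le> 2 powr (\<bar>m\<bar> / 2) * kweight k powr (m / 2)"
proof -
  have sq: "(1 + knorm k) powr m = ((1 + knorm k) powr 2) powr (m / 2)"
    by (simp add: powr_powr)
  have "0 \<le> (knorm k - 1)\<^sup>2"
    by simp
  then have upper: "(1 + knorm k) powr 2 \<le> 2 * kweight k"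
    using knorm_nonneg[of k] by (simp add: kweight_def power2_eq_square algebra_simps)
  have lower: "kweight k \<le> (1 + knorm k) powr 2"
    using knorm_nonneg[of k] by (simp add: kweight_def power2_eq_square algebra_simps)
  show ?thesis
  proof (cases "m \<ge> 0")
    case True
    then have "(1 + knorm k) powr m \<le> (2 * kweight k) powr (m / 2)"
      unfolding sq using upper knorm_nonneg[of k] by (intro powr_mono2) auto
    then show ?thesis
      using True by (simp add: powr_mult)
  next
    case False
    then have "(1 + knorm k) powr m \<le> kweight k powr (m / 2)"
      unfolding sq using lower kweight_pos[of k] by (intro powr_mono2') auto
    moreover have "1 \<le> 2 powr (\<bar>m\<bar> / 2)"
      by (rule ge_one_powr_ge_zero) auto
    ultimately show ?thesis
      using mult_right_mono[of 1 "2 powr (\<bar>m\<bar> / 2)" "kweight k powr (m / 2)"] by simp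
  qed
qed

lemma summable_on_inverse_one_plus_square_int:
  "(\<lambda>z::int. inverse (1 + (real_of_int z)\<^sup>2)) summable_on UNIV"
proof -
  have "summable (\<lambda>n. inverse (1 + (real n)\<^sup>2))"
    using inverse_power_summable[of 2, where 'a=real]
    by (rule summable_comparison_test'[where N=1]) (auto intro!: le_imp_inverse_le)
  then have nat: "(\<lambda>n::nat. inverse (1 + (real n)\<^sup>2)) summable_on UNIV"
    by (subst summable_on_UNIV_nonneg_real_iff) auto
  have "(\<lambda>z::int. inverse (1 + (real_of_int z)\<^sup>2)) summable_on range f"
    if "inj f" and abs_f: "\<And>n. \<bar>f n\<bar> = int n" for f :: "nat \<Rightarrow> int"
  proof -
    have "(real_of_int (f n))\<^sup>2 = (real n)\<^sup>2" for n
      by (metis abs_f of_int_abs of_int_of_nat_eq power2_abs)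
    then have "(\<lambda>z::int. inverse (1 + (real_of_int z)\<^sup>2)) \<circ> f = (\<lambda>n. inverse (1 + (real n)\<^sup>2))"
      by (simp add: fun_eq_iff)
    then show ?thesis
      using nat summable_on_reindex[OF \<open>inj f\<close>] by metis
  qed
  from this[of int] this[of "\<lambda>n. - int n"]
  have "(\<lambda>z::int. inverse (1 + (real_of_int z)\<^sup>2)) summable_on (range int \<union> range (\<lambda>n. - int n))"
    by (intro summable_on_union) (auto simp: inj_def)
  moreover have "range int \<union> range (\<lambda>n. - int n) = UNIV"
    by (auto intro: int_cases2 simp: image_iff)
  ultimately show ?thesis
    by simp
qed

lemma summable_on_prod_components:
  fixes t :: "int \<Rightarrow> real"
  assumes t: "\<And>z. t z \<ge> 0" "t summable_on UNIV"
  shows "(\<lambda>k::int ^ ('n::finite). \<Prod>i\<in>UNIV. t (k $ i)) summable_on UNIV"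
proof (rule nonneg_bounded_sums_summable_on)
  fix F :: "(int ^ 'n) set" assume F: "finite F"
  define Z where "Z = (\<Union>i. (\<lambda>k. k $ i) ` F)"
  have Z: "finite Z"
    unfolding Z_def using F by auto
  have sub: "F \<subseteq> vec_lambda ` PiE (UNIV :: 'n set) (\<lambda>_. Z)"
  proof
    fix k assume "k \<in> F"
    then have "vec_nth k \<in> PiE UNIV (\<lambda>_. Z)"
      by (auto simp: Z_def)
    then show "k \<in> vec_lambda ` PiE UNIV (\<lambda>_. Z)"
      by (auto intro!: image_eqI[of _ _ "vec_nth k"])
  qed
  have "(\<Sum>k\<in>F. \<Prod>i\<in>UNIV. t (k $ i)) \<le> (\<Sum>k\<in>vec_lambda ` PiE (UNIV :: 'n set) (\<lambda>_. Z). \<Prod>i\<in>UNIV. t (k $ i))"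
    by (rule sum_mono2[OF _ sub]) (auto simp: Z intro!: finite_PiE prod_nonneg t(1))
  also have "\<dots> = (\<Sum>f\<in>PiE (UNIV :: 'n set) (\<lambda>_. Z). \<Prod>i\<in>UNIV. t (f i))"
    by (subst sum.reindex) (auto simp: inj_on_def vec_lambda_inject)
  also have "\<dots> = (\<Sum>z\<in>Z. t z) ^ CARD('n)"
    by (subst prod_sum_PiE[symmetric]) (auto simp: Z)
  also have "\<dots> \<le> (infsum t UNIV) ^ CARD('n)"
    using finite_sum_le_infsum[OF t(2) Z] by (intro power_mono) (auto intro: sum_nonneg t(1))
  finally show "(\<Sum>k\<in>F. \<Prod>i\<in>UNIV. t (k $ i)) \<le> (infsum t UNIV) ^ CARD('n)" .
qed (auto intro: prod_nonneg t(1))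

lemma kweight_powr_le_prod:
  fixes k :: "int ^ ('n::{finite,linorder})"
  assumes "c \<ge> real CARD('n)"
  shows "kweight k powr (- c) \<le> (\<Prod>i\<in>UNIV. inverse (1 + (real_of_int (k $ i))\<^sup>2))"
proof -
  have "kweight k powr (- c) \<le> kweight k powr (- real CARD('n))"
    using assms kweight_ge_one[of k] by (intro powr_mono) auto
  also have "\<dots> = inverse (kweight k ^ CARD('n))"
    using kweight_pos[of k] by (simp add: powr_minus powr_realpow)
  also have "\<dots> \<le> inverse (\<Prod>i\<in>UNIV. 1 + (real_of_int (k $ i))\<^sup>2)"
  proof (rule le_imp_inverse_le)
    have "(\<Prod>i\<in>(UNIV::'n set). 1 + (real_of_int (k $ i))\<^sup>2) \<le> (\<Prod>i\<in>(UNIV::'n set). kweight k)"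
      using abs_component_le_knorm[of k] knorm_nonneg[of k]
      by (intro prod_mono) (auto simp: kweight_def abs_le_square_iff[symmetric])
    then show "(\<Prod>i\<in>UNIV. 1 + (real_of_int (k $ i))\<^sup>2) \<le> kweight k ^ CARD('n)"
      by simp
  qed (simp add: prod_pos add_pos_nonneg)
  also have "\<dots> = (\<Prod>i\<in>UNIV. inverse (1 + (real_of_int (k $ i))\<^sup>2))"
    using prod_inversef[of "\<lambda>i. 1 + (real_of_int (k $ i))\<^sup>2" UNIV] by (simp add: o_def)
  finally show ?thesis .
qed

lemma kweight_powr_summable:
  assumes "c \<ge> real CARD('n)"
  shows "(\<lambda>k::int ^ ('n::{finite,linorder}). kweight k powr (- c)) summable_on UNIV"
  by (rule summable_on_comparison_test[OF summable_on_prod_components kweight_powr_le_prod[OF assms]])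
     (simp_all add: summable_on_inverse_one_plus_square_int)

section \<open>The C*-norm\<close>

definition ell1 :: "('n::{finite,linorder}) coeff set" where
  "ell1 = {u. (\<lambda>k. norm (u k)) summable_on UNIV}"

definition l1norm :: "('n::{finite,linorder}) coeff \<Rightarrow> real" where
  "l1norm u = infsum (\<lambda>k. norm (u k)) UNIV"

definition finsupp_unit_ball :: "('n::{finite,linorder}) coeff set" where
  "finsupp_unit_ball = {\<xi>. finite {k. \<xi> k \<noteq> 0} \<and> l2norm \<xi> \<le> 1}"

lemma cnorm_eq_SUP: "cnorm \<theta> u = (SUP \<xi> \<in> finsupp_unit_ball. l2norm (tprod \<theta> u \<xi>))"
  by (simp add: cnorm_def finsupp_unit_ball_def)

lemma l1norm_nonneg: "l1norm u \<ge> 0"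
  by (simp add: l1norm_def infsum_nonneg)

lemma l2norm_nonneg: "l2norm \<xi> \<ge> 0"
  by (simp add: l2norm_def infsum_nonneg)

lemma norm_phase [simp]: "norm (phase \<theta> k l) = 1"
  by (simp add: phase_def)

lemma infsum_single: "infsum (\<lambda>k. if k = a then c else 0) UNIV = (c::'b::{comm_monoid_add,t2_space})"
  by (rule infsumI, rule has_sum_finite_neutralI[of "{a}"]) auto

lemma finite_support_reflect:
  fixes \<xi> :: "'a::ab_group_add \<Rightarrow> 'b::zero"
  shows "finite {k. \<xi> k \<noteq> 0} \<Longrightarrow> finite {k. \<xi> (p - k) \<noteq> 0}"
proof -
  have "{k. \<xi> (p - k) \<noteq> 0} = (\<lambda>j. p - j) ` {k. \<xi> k \<noteq> 0}"
    by (auto simp: image_iff intro!: exI[of _ "p - _"])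
  then show "finite {k. \<xi> k \<noteq> 0} \<Longrightarrow> finite {k. \<xi> (p - k) \<noteq> 0}"
    by simp
qed

lemma tprod_summand_summable:
  assumes "finite {k. \<xi> k \<noteq> 0}"
  shows "(\<lambda>k. u k * \<xi> (p - k) * phase \<theta> k (p - k)) summable_on UNIV"
    and "(\<lambda>k. norm (u k * \<xi> (p - k) * phase \<theta> k (p - k))) summable_on UNIV"
proof -
  have "finite {k. u k * \<xi> (p - k) * phase \<theta> k (p - k) \<noteq> 0}"
    by (rule finite_subset[OF _ finite_support_reflect[OF assms]]) auto
  then show "(\<lambda>k. u k * \<xi> (p - k) * phase \<theta> k (p - k)) summable_on UNIV"
    and "(\<lambda>k. norm (u k * \<xi> (p - k) * phase \<theta> k (p - k))) summable_on UNIV"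
    by (auto intro: finite_nonzero_values_imp_summable_on)
qed

lemma tprod_lincomb:
  assumes "finite {k. \<xi> k \<noteq> 0}"
  shows "tprod \<theta> (\<lambda>k. a * u k + b * v k) \<xi> = (\<lambda>p. a * tprod \<theta> u \<xi> p + b * tprod \<theta> v \<xi> p)"
proof
  fix p
  have "tprod \<theta> (\<lambda>k. a * u k + b * v k) \<xi> p
      = infsum (\<lambda>k. a * (u k * \<xi> (p - k) * phase \<theta> k (p - k)) + b * (v k * \<xi> (p - k) * phase \<theta> k (p - k))) UNIV"
    unfolding tprod_def by (simp add: distrib_right mult.assoc)
  also have "\<dots> = a * tprod \<theta> u \<xi> p + b * tprod \<theta> v \<xi> p"
    unfolding tprod_def using tprod_summand_summable(1)[OF assms]
    by (subst infsum_add) (auto intro: summable_on_cmult_right simp: infsum_cmult_right)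
  finally show "tprod \<theta> (\<lambda>k. a * u k + b * v k) \<xi> p = a * tprod \<theta> u \<xi> p + b * tprod \<theta> v \<xi> p" .
qed

lemma tprod_unit_right:
  "tprod \<theta> u (\<lambda>p. if p = j then 1 else 0) l = u (l - j) * phase \<theta> (l - j) j"
proof -
  have "(\<lambda>p. u p * (if l - p = j then 1 else 0) * phase \<theta> p (l - p))
      = (\<lambda>p. if p = l - j then u (l - j) * phase \<theta> (l - j) j else 0)"
    by (auto simp: fun_eq_iff)
  then show ?thesis
    unfolding tprod_def by (simp add: infsum_single)
qed

lemma norm_tprod_le:
  assumes "finite {k. \<xi> k \<noteq> 0}"
  shows "norm (tprod \<theta> u \<xi> p) \<le> infsum (\<lambda>k. norm (u (p - k)) * norm (\<xi> k)) UNIV"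
proof -
  have "norm (tprod \<theta> u \<xi> p) \<le> infsum (\<lambda>k. norm (u k) * norm (\<xi> (p - k))) UNIV"
    unfolding tprod_def using norm_infsum_bound[OF tprod_summand_summable(2)[OF assms]]
    by (simp add: norm_mult)
  also have "\<dots> = infsum (\<lambda>k. norm (u (p - k)) * norm (\<xi> k)) UNIV"
    using infsum_reflect[of "\<lambda>k. norm (u k) * norm (\<xi> (p - k))" p] by simp
  finally show ?thesis .
qed

lemma tprod_l2_bound:
  assumes u: "u \<in> ell1" and \<xi>: "finite {k. \<xi> k \<noteq> 0}"
  shows "(\<lambda>p. (norm (tprod \<theta> u \<xi> p))\<^sup>2) summable_on UNIV"
    and "l2norm (tprod \<theta> u \<xi>) \<le> l1norm u * l2norm \<xi>"
proof -
  define h where "h p = infsum (\<lambda>k. norm (u (p - k)) * norm (\<xi> k)) UNIV" for p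
  have \<xi>2: "(\<lambda>k. (norm (\<xi> k))\<^sup>2) summable_on UNIV"
    by (rule finite_nonzero_values_imp_summable_on, rule finite_subset[OF _ \<xi>]) auto
  note young = young_l1_l2[of "\<lambda>k. norm (u k)" "\<lambda>k. norm (\<xi> k)", folded h_def]
  note young = young[OF _ _ _ \<xi>2] u[unfolded ell1_def]
  have le: "(norm (tprod \<theta> u \<xi> p))\<^sup>2 \<le> (h p)\<^sup>2" for p
    unfolding h_def using norm_tprod_le[OF \<xi>] by (intro power_mono) auto
  show summable: "(\<lambda>p. (norm (tprod \<theta> u \<xi> p))\<^sup>2) summable_on UNIV"
    by (rule summable_on_comparison_test[OF young(2)]) (use le young in auto)
  have "infsum (\<lambda>p. (norm (tprod \<theta> u \<xi> p))\<^sup>2) UNIV \<le> infsum (\<lambda>p. (h p)\<^sup>2) UNIV"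
    by (rule infsum_mono[OF summable _ le]) (use young in auto)
  also have "\<dots> \<le> (l1norm u)\<^sup>2 * infsum (\<lambda>k. (norm (\<xi> k))\<^sup>2) UNIV"
    unfolding l1norm_def using young by auto
  finally have "sqrt (infsum (\<lambda>p. (norm (tprod \<theta> u \<xi> p))\<^sup>2) UNIV)
      \<le> sqrt ((l1norm u)\<^sup>2 * infsum (\<lambda>k. (norm (\<xi> k))\<^sup>2) UNIV)"
    by (rule real_sqrt_le_mono)
  then show "l2norm (tprod \<theta> u \<xi>) \<le> l1norm u * l2norm \<xi>"
    unfolding l2norm_def by (simp add: real_sqrt_mult l1norm_nonneg)
qed

lemma l2norm_lincomb_le:
  assumes "(\<lambda>p. (norm (x p))\<^sup>2) summable_on UNIV" and "(\<lambda>p. (norm (y p))\<^sup>2) summable_on UNIV"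
  shows "l2norm (\<lambda>p. a * x p + b * y p) \<le> norm a * l2norm x + norm b * l2norm y"
proof -
  define R where "R = norm a * l2norm x + norm b * l2norm y"
  have R: "R \<ge> 0"
    unfolding R_def by (simp add: l2norm_nonneg)
  have L2_set_le: "L2_set (\<lambda>p. norm (z p)) F \<le> l2norm z"
    if "finite F" and "(\<lambda>p. (norm (z p))\<^sup>2) summable_on UNIV" for F and z :: "'a coeff"
    unfolding L2_set_def l2norm_def by (intro real_sqrt_le_mono finite_sum_le_infsum that) auto
  have "(\<Sum>p\<in>F. (norm (a * x p + b * y p))\<^sup>2) \<le> R\<^sup>2" if F: "finite F" for F
  proof -
    have "L2_set (\<lambda>p. norm (a * x p + b * y p)) F
        \<le> L2_set (\<lambda>p. norm a * norm (x p) + norm b * norm (y p)) F"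
      by (rule L2_set_mono) (auto intro: norm_triangle_le simp: norm_mult)
    also have "\<dots> \<le> norm a * L2_set (\<lambda>p. norm (x p)) F + norm b * L2_set (\<lambda>p. norm (y p)) F"
      using L2_set_triangle_ineq by (simp add: L2_set_right_distrib)
    also have "\<dots> \<le> R"
      unfolding R_def by (intro add_mono mult_left_mono L2_set_le F assms) auto
    finally show ?thesis
      using R by (simp add: L2_set_def real_sqrt_le_iff sqrt_le_D)
  qed
  then have "infsum (\<lambda>p. (norm (a * x p + b * y p))\<^sup>2) UNIV \<le> R\<^sup>2"
    using nonneg_bounded_sums_summable_on(2)[of "\<lambda>p. (norm (a * x p + b * y p))\<^sup>2" "R\<^sup>2"] by auto
  then have "l2norm (\<lambda>p. a * x p + b * y p) \<le> sqrt (R\<^sup>2)"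
    unfolding l2norm_def by (rule real_sqrt_le_mono)
  then show ?thesis
    using R by (simp add: R_def)
qed

lemma unit_coeff_in_finsupp_unit_ball:
  "(\<lambda>p::int ^ ('n::{finite,linorder}). if p = 0 then 1 else 0) \<in> finsupp_unit_ball"
proof -
  have sq: "(\<lambda>k::int ^ ('n::{finite,linorder}). (norm (if k = 0 then 1 else 0 :: complex))\<^sup>2)
      = (\<lambda>k. if k = 0 then 1 else 0)"
    by (auto simp: fun_eq_iff)
  have "l2norm (\<lambda>p::int ^ ('n::{finite,linorder}). if p = 0 then 1 else 0) = 1"
    unfolding l2norm_def sq infsum_single by simp
  then show ?thesis
    by (simp add: finsupp_unit_ball_def)
qed

lemma cnorm_bdd_above:
  "u \<in> ell1 \<Longrightarrow> bdd_above ((\<lambda>\<xi>. l2norm (tprod \<theta> u \<xi>)) ` finsupp_unit_ball)"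
  by (rule bdd_aboveI2[of _ _ "l1norm u"])
     (auto simp: finsupp_unit_ball_def intro!: order_trans[OF tprod_l2_bound(2)] mult_left_le l1norm_nonneg)

lemma l2norm_tprod_le_cnorm:
  "u \<in> ell1 \<Longrightarrow> \<xi> \<in> finsupp_unit_ball \<Longrightarrow> l2norm (tprod \<theta> u \<xi>) \<le> cnorm \<theta> u"
  unfolding cnorm_eq_SUP by (intro cSUP_upper cnorm_bdd_above)

lemma norm_coeff_le_cnorm:
  assumes "u \<in> ell1"
  shows "norm (u j) \<le> cnorm \<theta> u"
proof -
  have "tprod \<theta> u (\<lambda>p. if p = 0 then 1 else 0) = u"
    by (simp add: fun_eq_iff tprod_unit_right phase_def)
  then have "l2norm u \<le> cnorm \<theta> u"
    using l2norm_tprod_le_cnorm[OF assms unit_coeff_in_finsupp_unit_ball, of \<theta>] by metis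
  moreover have "(\<lambda>k. (norm (u k))\<^sup>2) summable_on UNIV"
    using tprod_l2_bound(1)[OF assms, of "\<lambda>p. if p = 0 then 1 else 0" \<theta>]
          \<open>tprod \<theta> u (\<lambda>p. if p = 0 then 1 else 0) = u\<close>
    by simp
  then have "(norm (u j))\<^sup>2 \<le> infsum (\<lambda>k. (norm (u k))\<^sup>2) UNIV"
    by (rule single_le_infsum) simp
  then have "norm (u j) \<le> l2norm u"
    unfolding l2norm_def by (simp add: real_le_rsqrt)
  ultimately show ?thesis
    by linarith
qed

lemma cnorm_nonneg: "u \<in> ell1 \<Longrightarrow> cnorm \<theta> u \<ge> 0"
  using norm_coeff_le_cnorm norm_ge_zero order_trans by blast

lemma cnorm_lincomb_le:
  assumes u: "u \<in> ell1" and v: "v \<in> ell1"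
  shows "cnorm \<theta> (\<lambda>k. a * u k + b * v k) \<le> norm a * cnorm \<theta> u + norm b * cnorm \<theta> v"
  unfolding cnorm_eq_SUP[of \<theta> "\<lambda>k. a * u k + b * v k"]
proof (rule cSUP_least)
  show "finsupp_unit_ball \<noteq> {}"
    using unit_coeff_in_finsupp_unit_ball by blast
next
  fix \<xi> :: "'a coeff" assume \<xi>: "\<xi> \<in> finsupp_unit_ball"
  then have fin: "finite {k. \<xi> k \<noteq> 0}"
    by (simp add: finsupp_unit_ball_def)
  have "l2norm (tprod \<theta> (\<lambda>k. a * u k + b * v k) \<xi>)
      \<le> norm a * l2norm (tprod \<theta> u \<xi>) + norm b * l2norm (tprod \<theta> v \<xi>)"
    unfolding tprod_lincomb[OF fin]
    by (intro l2norm_lincomb_le tprod_l2_bound(1) u v fin)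
  also have "\<dots> \<le> norm a * cnorm \<theta> u + norm b * cnorm \<theta> v"
    by (intro add_mono mult_left_mono l2norm_tprod_le_cnorm u v \<xi>) auto
  finally show "l2norm (tprod \<theta> (\<lambda>k. a * u k + b * v k) \<xi>) \<le> norm a * cnorm \<theta> u + norm b * cnorm \<theta> v" .
qed

section \<open>Smooth elements\<close>

lemma Asm_lincomb:
  assumes "u \<in> Asm" and "v \<in> Asm"
  shows "(\<lambda>k. a * u k + b * v k) \<in> Asm"
  unfolding Asm_def
proof (intro CollectI allI)
  fix N :: nat
  obtain Cu Cv where Cu: "\<And>k. norm (u k) * (1 + knorm k) ^ N \<le> Cu"
    and Cv: "\<And>k. norm (v k) * (1 + knorm k) ^ N \<le> Cv"
    using assms unfolding Asm_def by blast
  have "norm (a * u k + b * v k) * (1 + knorm k) ^ N \<le> norm a * Cu + norm b * Cv" for k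
  proof -
    have "norm (a * u k + b * v k) * (1 + knorm k) ^ N
        \<le> (norm a * norm (u k) + norm b * norm (v k)) * (1 + knorm k) ^ N"
      using knorm_nonneg[of k]
      by (intro mult_right_mono) (auto intro: norm_triangle_le simp: norm_mult)
    also have "\<dots> = norm a * (norm (u k) * (1 + knorm k) ^ N) + norm b * (norm (v k) * (1 + knorm k) ^ N)"
      by (simp add: algebra_simps)
    also have "\<dots> \<le> norm a * Cu + norm b * Cv"
      by (intro add_mono mult_left_mono Cu Cv) auto
    finally show ?thesis .
  qed
  then show "\<exists>C. \<forall>k. norm (a * u k + b * v k) * (1 + knorm k) ^ N \<le> C"
    by blast
qed

lemma Asm_diff: "A \<in> Asm \<Longrightarrow> B \<in> Asm \<Longrightarrow> (\<lambda>k. A k - B k) \<in> Asm"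
  using Asm_lincomb[of A B 1 "- 1"] by simp

lemma Asm_diff_quotient:
  assumes "A \<in> Asm" and "B \<in> Asm" and "X \<in> Asm"
  shows "(\<lambda>k. (A k - B k) / c - X k) \<in> Asm"
proof -
  have "(\<lambda>k. 1 * ((\<lambda>k. inverse c * A k + (- inverse c) * B k) k) + (- 1) * X k) \<in> Asm"
    by (intro Asm_lincomb assms)
  moreover have "(\<lambda>k. 1 * ((\<lambda>k. inverse c * A k + (- inverse c) * B k) k) + (- 1) * X k)
      = (\<lambda>k. (A k - B k) / c - X k)"
    by (simp add: fun_eq_iff divide_inverse left_diff_distrib right_diff_distrib mult.commute)
  ultimately show ?thesis
    by simp
qed

lemma Asm_finite_support: "finite {k. u k \<noteq> 0} \<Longrightarrow> u \<in> Asm"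
  unfolding Asm_def
proof (intro CollectI allI exI)
  fix N :: nat and k
  assume fin: "finite {k. u k \<noteq> 0}"
  show "norm (u k) * (1 + knorm k) ^ N \<le> (\<Sum>j\<in>{k. u k \<noteq> 0}. norm (u j) * (1 + knorm j) ^ N)"
    using fin
    by (cases "u k = 0")
       (auto intro!: member_le_sum sum_nonneg mult_nonneg_nonneg zero_le_power add_nonneg_nonneg knorm_nonneg)
qed

lemma Asm_subset_ell1: "Asm \<subseteq> ell1"
proof
  fix u :: "('n::{finite,linorder}) coeff"
  assume "u \<in> Asm"
  then obtain C where C: "\<And>k. norm (u k) * (1 + knorm k) ^ (2 * CARD('n)) \<le> C"
    unfolding Asm_def by blast
  have "norm (u k) \<le> C * kweight k powr (- real CARD('n))" for k
  proof -
    have "(1 + knorm k) powr real (2 * CARD('n)) = (1 + knorm k) ^ (2 * CARD('n))"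
      using knorm_nonneg[of k] by (intro powr_realpow) simp
    then have "kweight k powr (real (2 * CARD('n)) / 2) \<le> (1 + knorm k) ^ (2 * CARD('n))"
      using kweight_powr_half_le[of "real (2 * CARD('n))" k] by simp
    then have "norm (u k) * kweight k powr (real CARD('n)) \<le> C"
      using C[of k] by (simp add: order_trans[OF mult_left_mono])
    then show ?thesis
      using kweight_pos[of k] by (simp add: powr_minus field_simps)
  qed
  then show "u \<in> ell1"
    unfolding ell1_def
    by (intro CollectI summable_on_comparison_test[OF summable_on_cmult_right[OF kweight_powr_summable]])
       auto
qed

lemma norm_delta:
  "norm (delta \<alpha> u k) = (\<Prod>i\<in>UNIV. \<bar>real_of_int (k $ i)\<bar> ^ (\<alpha> $ i)) * norm (u k)"
  by (simp add: delta_def norm_mult prod_norm[symmetric] norm_power)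

lemma delta_lincomb:
  "delta \<alpha> (\<lambda>k. a * u k + b * v k) = (\<lambda>k. a * delta \<alpha> u k + b * delta \<alpha> v k)"
  by (simp add: delta_def fun_eq_iff algebra_simps)

lemma delta_zero [simp]: "delta 0 u = u"
  by (simp add: delta_def)

lemma delta_Asm:
  assumes "u \<in> Asm"
  shows "delta \<alpha> u \<in> Asm"
  unfolding Asm_def
proof (intro CollectI allI)
  fix N :: nat
  obtain C where C: "\<And>k. norm (u k) * (1 + knorm k) ^ (N + mlen \<alpha>) \<le> C"
    using assms unfolding Asm_def by blast
  have "norm (delta \<alpha> u k) * (1 + knorm k) ^ N \<le> C" for k
  proof -
    have "(\<Prod>i\<in>UNIV. \<bar>real_of_int (k $ i)\<bar> ^ (\<alpha> $ i)) \<le> (\<Prod>i\<in>UNIV. (1 + knorm k) ^ (\<alpha> $ i))"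
      by (intro prod_mono conjI power_mono) (auto intro: order_trans[OF abs_component_le_knorm])
    also have "\<dots> = (1 + knorm k) ^ mlen \<alpha>"
      by (simp add: mlen_def power_sum)
    finally have P: "(\<Prod>i\<in>UNIV. \<bar>real_of_int (k $ i)\<bar> ^ (\<alpha> $ i)) \<le> (1 + knorm k) ^ mlen \<alpha>" .
    have "norm (delta \<alpha> u k) * (1 + knorm k) ^ N
        = norm (u k) * (1 + knorm k) ^ N * (\<Prod>i\<in>UNIV. \<bar>real_of_int (k $ i)\<bar> ^ (\<alpha> $ i))"
      by (simp add: norm_delta mult_ac)
    also have "\<dots> \<le> norm (u k) * (1 + knorm k) ^ N * (1 + knorm k) ^ mlen \<alpha>"
      using knorm_nonneg[of k] by (intro mult_left_mono[OF P]) simp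
    also have "\<dots> = norm (u k) * (1 + knorm k) ^ (N + mlen \<alpha>)"
      by (simp add: power_add mult.assoc)
    finally show ?thesis
      using C[of k] by linarith
  qed
  then show "\<exists>C. \<forall>k. norm (delta \<alpha> u k) * (1 + knorm k) ^ N \<le> C"
    by blast
qed

lemma delta_Asm_ell1: "u \<in> Asm \<Longrightarrow> delta \<alpha> u \<in> ell1"
  using Asm_subset_ell1 delta_Asm by blast

lemma cnorm_delta_lincomb_le:
  assumes "u \<in> Asm" and "v \<in> Asm"
  shows "cnorm \<theta> (delta \<alpha> (\<lambda>k. a * u k + b * v k))
           \<le> norm a * cnorm \<theta> (delta \<alpha> u) + norm b * cnorm \<theta> (delta \<alpha> v)"
  unfolding delta_lincomb by (intro cnorm_lincomb_le delta_Asm_ell1 assms)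

section \<open>Symbols\<close>

lemma nth_le_mlen: "\<beta> $ i \<le> mlen \<beta>"
  unfolding mlen_def by (rule member_le_sum) auto

lemma mlen_cases:
  obtains "\<beta> = 0" | j \<beta>' where "\<beta> = \<beta>' + axis j 1" and "mlen \<beta>' < mlen \<beta>"
proof (cases "\<beta> = 0")
  case False
  then obtain j where j: "\<beta> $ j \<noteq> 0"
    by (auto simp: vec_eq_iff)
  define \<beta>' where "\<beta>' = (\<chi> i. if i = j then \<beta> $ i - 1 else \<beta> $ i)"
  have "\<beta> = \<beta>' + axis j 1"
    using j by (simp add: vec_eq_iff \<beta>'_def axis_def)
  moreover from this have "mlen \<beta>' < mlen \<beta>"
    by (simp add: mlen_def axis_def sum.distrib)
  ultimately show ?thesis
    using that(2) by blast
qed simp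

lemma finite_mlen_le: "finite {\<alpha> :: nat ^ ('n::{finite,linorder}). mlen \<alpha> \<le> N}"
proof (rule finite_subset)
  show "{\<alpha>. mlen \<alpha> \<le> N} \<subseteq> vec_lambda ` PiE (UNIV :: ('n::{finite,linorder}) set) (\<lambda>_. {..N})"
  proof
    fix \<alpha> :: "nat ^ ('n::{finite,linorder})" assume "\<alpha> \<in> {\<alpha>. mlen \<alpha> \<le> N}"
    then have "vec_nth \<alpha> \<in> PiE UNIV (\<lambda>_. {..N})"
      using nth_le_mlen[of \<alpha>] by (auto intro: order_trans)
    then show "\<alpha> \<in> vec_lambda ` PiE UNIV (\<lambda>_. {..N})"
      by (auto intro!: image_eqI[of _ _ "vec_nth \<alpha>"])
  qed
qed (intro finite_imageI finite_PiE; simp)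

lemma smooth_familyD:
  assumes "smooth_family \<theta> \<rho> D"
  shows "D 0 = \<rho>" and "D \<beta> \<xi> \<in> Asm"
    and "((\<lambda>\<eta>. cnorm \<theta> (delta \<alpha> (\<lambda>k. D \<beta> \<eta> k - D \<beta> \<xi> k))) \<longlongrightarrow> 0) (at \<xi>)"
    and "((\<lambda>h. cnorm \<theta> (delta \<alpha>
           (\<lambda>k. (D \<beta> (\<xi> + h *\<^sub>R axis j 1) k - D \<beta> \<xi> k) / complex_of_real h
                  - D (\<beta> + axis j 1) \<xi> k))) \<longlongrightarrow> 0) (at 0)"
  using assms unfolding smooth_family_def by blast+

text \<open>Since \<open>cnorm\<close> dominates every Fourier coefficient, the derivatives of a smooth
  family are its coefficientwise difference quotients; hence \<open>symD\<close> is well defined.\<close>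

lemma smooth_family_coeff_deriv:
  assumes D: "smooth_family \<theta> \<rho> D"
  shows "((\<lambda>h. (D \<beta> (\<xi> + h *\<^sub>R axis j 1) k - D \<beta> \<xi> k) / complex_of_real h)
           \<longlongrightarrow> D (\<beta> + axis j 1) \<xi> k) (at 0)"
proof -
  define q where "q h = (\<lambda>k. (D \<beta> (\<xi> + h *\<^sub>R axis j 1) k - D \<beta> \<xi> k) / complex_of_real h
                           - D (\<beta> + axis j 1) \<xi> k)" for h
  have "q h \<in> Asm" for h
    unfolding q_def by (intro Asm_diff_quotient smooth_familyD(2)[OF D])
  then have "\<forall>h. norm (q h k) \<le> cnorm \<theta> (q h)"
    using Asm_subset_ell1 by (blast intro: norm_coeff_le_cnorm)
  moreover have "((\<lambda>h. cnorm \<theta> (q h)) \<longlongrightarrow> 0) (at 0)"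
    using smooth_familyD(4)[OF D, of 0] unfolding q_def delta_zero .
  ultimately have "((\<lambda>h. q h k) \<longlongrightarrow> 0) (at 0)"
    by (rule Lim_null_comparison[OF always_eventually])
  then show ?thesis
    by (simp add: q_def LIM_zero_iff)
qed

lemma smooth_family_unique:
  assumes D: "smooth_family \<theta> \<rho> D" and D': "smooth_family \<theta> \<rho> D'"
  shows "D = D'"
proof
  fix \<beta>
  show "D \<beta> = D' \<beta>"
  proof (induction "mlen \<beta>" arbitrary: \<beta> rule: less_induct)
    case less
    show ?case
    proof (cases \<beta> rule: mlen_cases)
      case 1
      then show ?thesis
        using smooth_familyD(1)[OF D] smooth_familyD(1)[OF D'] by simp
    next
      case (2 j \<beta>')
      have IH: "D \<beta>' = D' \<beta>'"
        using less(1)[OF 2(2)] .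
      show ?thesis
      proof (intro ext)
        fix \<xi> k
        show "D \<beta> \<xi> k = D' \<beta> \<xi> k"
          using smooth_family_coeff_deriv[OF D, of \<beta>' \<xi> j k] smooth_family_coeff_deriv[OF D', of \<beta>' \<xi> j k]
          unfolding IH 2(1) by (rule LIM_unique)
      qed
    qed
  qed
qed

lemma symD_eq: "smooth_family \<theta> \<rho> D \<Longrightarrow> symD \<theta> \<rho> = D"
  unfolding symD_def using someI[of "smooth_family \<theta> \<rho>" D] smooth_family_unique by blast

lemma symbol_classE:
  assumes "\<rho> \<in> symbol_class \<theta> m"
  obtains "smooth_family \<theta> \<rho> (symD \<theta> \<rho>)"
    and "\<And>\<alpha> \<beta>. \<exists>C. \<forall>\<xi>. cnorm \<theta> (delta \<alpha> (symD \<theta> \<rho> \<beta> \<xi>)) \<le> C * (1 + norm \<xi>) powr (m - real (mlen \<beta>))"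
  using assms symD_eq unfolding symbol_class_def by blast

lemma symbol_class_Asm: "\<rho> \<in> symbol_class \<theta> m \<Longrightarrow> \<rho> \<xi> \<in> Asm"
  by (metis smooth_familyD(1,2) symbol_classE)

lemma symb_seminorm_ge:
  fixes \<rho> :: "real ^ ('n::{finite,linorder}) \<Rightarrow> ('n::{finite,linorder}) coeff"
  assumes \<rho>: "\<rho> \<in> symbol_class \<theta> m" and N: "mlen \<alpha> + mlen \<beta> \<le> N"
  shows "(1 + norm \<xi>) powr (real (mlen \<beta>) - m) * cnorm \<theta> (delta \<alpha> (symD \<theta> \<rho> \<beta> \<xi>))
           \<le> symb_seminorm \<theta> m N \<rho>"
proof -
  obtain C where C: "\<And>\<alpha> \<beta> \<xi>. cnorm \<theta> (delta \<alpha> (symD \<theta> \<rho> \<beta> \<xi>)) \<le> C \<alpha> \<beta> * (1 + norm \<xi>) powr (m - real (mlen \<beta>))"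
    using symbol_classE[OF \<rho>] by metis
  define A where "A = {\<alpha> :: nat ^ ('n::{finite,linorder}). mlen \<alpha> \<le> N}"
  define B where "B = (\<Sum>(\<alpha>, \<beta>)\<in>A \<times> A. \<bar>C \<alpha> \<beta>\<bar>)"
  have bound: "(1 + norm \<xi>) powr (real (mlen \<beta>) - m) * cnorm \<theta> (delta \<alpha> (symD \<theta> \<rho> \<beta> \<xi>)) \<le> B"
    if "mlen \<alpha> + mlen \<beta> \<le> N" for \<alpha> \<beta> :: "nat ^ ('n::{finite,linorder})" and \<xi> :: "real ^ ('n::{finite,linorder})"
  proof -
    have "(1 + norm \<xi>) powr (real (mlen \<beta>) - m) * cnorm \<theta> (delta \<alpha> (symD \<theta> \<rho> \<beta> \<xi>))
        \<le> (1 + norm \<xi>) powr (real (mlen \<beta>) - m) * (C \<alpha> \<beta> * (1 + norm \<xi>) powr (m - real (mlen \<beta>)))"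
      by (intro mult_left_mono C) simp
    also have "\<dots> = C \<alpha> \<beta>"
      using add_pos_nonneg[OF zero_less_one norm_ge_zero[of \<xi>]] by (simp add: powr_add[symmetric])
    also have "\<dots> \<le> B"
    proof -
      have "(\<alpha>, \<beta>) \<in> A \<times> A"
        using that by (auto simp: A_def)
      then have "\<bar>C \<alpha> \<beta>\<bar> \<le> B"
        unfolding B_def using finite_mlen_le[of N]
        by (intro member_le_sum[of "(\<alpha>, \<beta>)" _ "\<lambda>(\<alpha>, \<beta>). \<bar>C \<alpha> \<beta>\<bar>", simplified]) (auto simp: A_def)
      then show ?thesis
        by simp
    qed
    finally show ?thesis .
  qed
  have bdd: "bdd_above ((\<lambda>(\<alpha>, \<beta>, \<xi>). (1 + norm \<xi>) powr (real (mlen \<beta>) - m)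
            * cnorm \<theta> (delta \<alpha> (symD \<theta> \<rho> \<beta> \<xi>))) ` {(\<alpha>, \<beta>, \<xi>). mlen \<alpha> + mlen \<beta> \<le> N})"
    by (rule bdd_aboveI2[of _ _ B]) (auto intro: bound)
  have "(\<alpha>, \<beta>, \<xi>) \<in> {(\<alpha>, \<beta>, \<xi>). mlen \<alpha> + mlen \<beta> \<le> N}"
    using N by simp
  from cSUP_upper[OF this bdd] show ?thesis
    unfolding symb_seminorm_def by simp
qed

lemma symb_seminorm_nonneg:
  assumes "\<rho> \<in> symbol_class \<theta> m"
  shows "symb_seminorm \<theta> m N \<rho> \<ge> 0"
proof -
  obtain "smooth_family \<theta> \<rho> (symD \<theta> \<rho>)"
    using symbol_classE[OF assms] by blast
  then have "symD \<theta> \<rho> 0 = \<rho>"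
    by (rule smooth_familyD(1))
  moreover have "cnorm \<theta> (\<rho> 0) \<ge> 0"
    using Asm_subset_ell1 symbol_class_Asm[OF assms] by (intro cnorm_nonneg) blast
  ultimately show ?thesis
    using symb_seminorm_ge[OF assms, of 0 0 N 0] by (simp add: mlen_def)
qed

lemma symbol_delta_bound:
  fixes \<rho> :: "real ^ ('n::{finite,linorder}) \<Rightarrow> ('n::{finite,linorder}) coeff"
  assumes \<rho>: "\<rho> \<in> symbol_class \<theta> m" and N: "mlen \<alpha> \<le> N"
  shows "norm (delta \<alpha> (\<rho> \<xi>) j) \<le> symb_seminorm \<theta> m N \<rho> * (1 + norm \<xi>) powr m"
proof -
  obtain "smooth_family \<theta> \<rho> (symD \<theta> \<rho>)"
    using symbol_classE[OF \<rho>] by blast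
  then have D0: "symD \<theta> \<rho> 0 = \<rho>"
    by (rule smooth_familyD(1))
  have pos: "1 + norm \<xi> > 0"
    by (simp add: add_pos_nonneg)
  have "norm (delta \<alpha> (\<rho> \<xi>) j) \<le> cnorm \<theta> (delta \<alpha> (\<rho> \<xi>))"
    by (intro norm_coeff_le_cnorm delta_Asm_ell1 symbol_class_Asm[OF \<rho>])
  also have "\<dots> = (1 + norm \<xi>) powr m * ((1 + norm \<xi>) powr (- m) * cnorm \<theta> (delta \<alpha> (\<rho> \<xi>)))"
    using pos by (simp add: powr_minus)
  also have "\<dots> \<le> (1 + norm \<xi>) powr m * symb_seminorm \<theta> m N \<rho>"
    using symb_seminorm_ge[OF \<rho>, of \<alpha> 0 N \<xi>] N by (intro mult_left_mono) (simp_all add: D0 mlen_def)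
  finally show ?thesis
    by (simp add: mult.commute)
qed

lemma one_plus_knorm_power_le_sum:
  "(1 + knorm j) ^ N \<le> (real CARD('n) + 1) ^ N * (1 + (\<Sum>i\<in>UNIV. \<bar>real_of_int (j $ i)\<bar> ^ N))"
  for j :: "int ^ ('n::{finite,linorder})"
proof -
  define M where "M = Max (insert 1 (range (\<lambda>i. \<bar>real_of_int (j $ i)\<bar>)))"
  have M: "1 \<le> M" "\<And>i. \<bar>real_of_int (j $ i)\<bar> \<le> M"
    unfolding M_def by (auto intro: Max_ge simp del: Max_insert)
  have "1 + knorm j \<le> M + (\<Sum>i\<in>(UNIV :: 'n set). M)"
    using add_mono[OF M(1) order_trans[OF knorm_le_sum_abs sum_mono[OF M(2)]]] .
  then have "(1 + knorm j) ^ N \<le> ((real CARD('n) + 1) * M) ^ N"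
    using knorm_nonneg[of j] by (intro power_mono) (auto simp: algebra_simps)
  also have "\<dots> = (real CARD('n) + 1) ^ N * M ^ N"
    by (simp add: power_mult_distrib)
  also have "M ^ N \<le> 1 + (\<Sum>i\<in>UNIV. \<bar>real_of_int (j $ i)\<bar> ^ N)"
  proof -
    have "M \<in> insert 1 (range (\<lambda>i. \<bar>real_of_int (j $ i)\<bar>))"
      unfolding M_def by (intro Max_in) auto
    then consider "M = 1" | i where "M = \<bar>real_of_int (j $ i)\<bar>"
      by auto
    then show ?thesis
    proof cases
      case (2 i)
      have "M ^ N \<le> (\<Sum>i\<in>UNIV. \<bar>real_of_int (j $ i)\<bar> ^ N)"
        unfolding 2 by (rule member_le_sum) auto
      then show ?thesis
        by simp
    qed (simp add: sum_nonneg)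
  qed
  then have "(real CARD('n) + 1) ^ N * M ^ N
      \<le> (real CARD('n) + 1) ^ N * (1 + (\<Sum>i\<in>UNIV. \<bar>real_of_int (j $ i)\<bar> ^ N))"
    by (intro mult_left_mono) auto
  finally show ?thesis .
qed

text \<open>\<open>\<delta>\<^sup>\<alpha>\<close> with \<open>\<alpha> = N e\<^sub>i\<close> multiplies the \<open>j\<close>-th coefficient by
  \<open>j\<^sub>i\<^sup>N\<close>, and \<open>cnorm\<close> dominates every coefficient.\<close>

lemma symbol_coeff_decay:
  fixes \<rho> :: "real ^ ('n::{finite,linorder}) \<Rightarrow> ('n::{finite,linorder}) coeff"
  assumes \<rho>: "\<rho> \<in> symbol_class \<theta> m"
  shows "norm (\<rho> \<xi> j) \<le> (real CARD('n) + 1) ^ (N + 1) * symb_seminorm \<theta> m N \<rho>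
                             * (1 + norm \<xi>) powr m * kweight j powr (- (real N / 2))"
proof -
  define P where "P = symb_seminorm \<theta> m N \<rho> * (1 + norm \<xi>) powr m"
  have P0: "norm (\<rho> \<xi> j) \<le> P"
    unfolding P_def using symbol_delta_bound[OF \<rho>, of 0 N \<xi> j] by (simp add: mlen_def)
  have Pi: "\<bar>real_of_int (j $ i)\<bar> ^ N * norm (\<rho> \<xi> j) \<le> P" for i
  proof -
    define \<alpha> where "\<alpha> = (\<chi> i'. if i' = i then N else (0::nat))"
    have "mlen \<alpha> = N"
      by (simp add: mlen_def \<alpha>_def)
    moreover have "(\<Prod>i'\<in>UNIV. \<bar>real_of_int (j $ i')\<bar> ^ (\<alpha> $ i')) = \<bar>real_of_int (j $ i)\<bar> ^ N"
      by (simp add: \<alpha>_def if_distrib[of "\<lambda>e. _ ^ e"] prod.If_cases)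
    ultimately show ?thesis
      unfolding P_def using symbol_delta_bound[OF \<rho>, of \<alpha> N \<xi> j] by (simp add: norm_delta)
  qed
  have "(1 + knorm j) ^ N * norm (\<rho> \<xi> j)
      \<le> (real CARD('n) + 1) ^ N * (1 + (\<Sum>i\<in>UNIV. \<bar>real_of_int (j $ i)\<bar> ^ N)) * norm (\<rho> \<xi> j)"
    by (intro mult_right_mono one_plus_knorm_power_le_sum) simp
  also have "\<dots> = (real CARD('n) + 1) ^ N
      * (norm (\<rho> \<xi> j) + (\<Sum>i\<in>UNIV. \<bar>real_of_int (j $ i)\<bar> ^ N * norm (\<rho> \<xi> j)))"
    by (simp add: distrib_right sum_distrib_right)
  also have "\<dots> \<le> (real CARD('n) + 1) ^ N * (P + (\<Sum>i\<in>(UNIV :: 'n set). P))"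
    by (intro mult_left_mono add_mono sum_mono P0 Pi) auto
  also have "\<dots> = (real CARD('n) + 1) ^ (N + 1) * P"
    by (simp add: algebra_simps)
  finally have bound: "(1 + knorm j) ^ N * norm (\<rho> \<xi> j) \<le> (real CARD('n) + 1) ^ (N + 1) * P" .
  have "kweight j powr (real N / 2) \<le> (1 + knorm j) ^ N"
    using kweight_powr_half_le[of "real N" j] knorm_nonneg[of j] by (simp add: powr_realpow)
  then have "kweight j powr (real N / 2) * norm (\<rho> \<xi> j) \<le> (real CARD('n) + 1) ^ (N + 1) * P"
    using bound by (meson mult_right_mono norm_ge_zero order_trans)
  then show ?thesis
    using kweight_pos[of j] unfolding P_def by (simp add: powr_minus field_simps)
qed

lemma tendsto_cnorm_delta_lincomb:
  assumes "\<And>x. X x \<in> Asm" and "\<And>x. Y x \<in> Asm"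
    and "((\<lambda>x. cnorm \<theta> (delta \<alpha> (X x))) \<longlongrightarrow> 0) F"
    and "((\<lambda>x. cnorm \<theta> (delta \<alpha> (Y x))) \<longlongrightarrow> 0) F"
  shows "((\<lambda>x. cnorm \<theta> (delta \<alpha> (\<lambda>k. a * X x k + b * Y x k))) \<longlongrightarrow> 0) F"
proof (rule Lim_null_comparison[OF always_eventually])
  show "\<forall>x. norm (cnorm \<theta> (delta \<alpha> (\<lambda>k. a * X x k + b * Y x k)))
      \<le> norm a * cnorm \<theta> (delta \<alpha> (X x)) + norm b * cnorm \<theta> (delta \<alpha> (Y x))"
    using cnorm_delta_lincomb_le[OF assms(1,2)] cnorm_nonneg[OF delta_Asm_ell1[OF Asm_lincomb[OF assms(1,2)]]]
    by simp
  show "((\<lambda>x. norm a * cnorm \<theta> (delta \<alpha> (X x)) + norm b * cnorm \<theta> (delta \<alpha> (Y x))) \<longlongrightarrow> 0) F"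
    using tendsto_add[OF tendsto_mult_right_zero[OF assms(3)] tendsto_mult_right_zero[OF assms(4)]]
    by simp
qed

lemma smooth_family_lincomb:
  assumes D1: "smooth_family \<theta> \<rho>1 D1" and D2: "smooth_family \<theta> \<rho>2 D2"
  shows "smooth_family \<theta> (\<lambda>\<xi> k. a * \<rho>1 \<xi> k + b * \<rho>2 \<xi> k) (\<lambda>\<beta> \<xi> k. a * D1 \<beta> \<xi> k + b * D2 \<beta> \<xi> k)"
  unfolding smooth_family_def
proof (intro conjI allI)
  note A1 = smooth_familyD(2)[OF D1] and A2 = smooth_familyD(2)[OF D2]
  show "(\<lambda>\<xi> k. a * D1 0 \<xi> k + b * D2 0 \<xi> k) = (\<lambda>\<xi> k. a * \<rho>1 \<xi> k + b * \<rho>2 \<xi> k)"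
    using smooth_familyD(1)[OF D1] smooth_familyD(1)[OF D2] by simp
  fix \<beta> \<xi>
  show "(\<lambda>k. a * D1 \<beta> \<xi> k + b * D2 \<beta> \<xi> k) \<in> Asm"
    by (intro Asm_lincomb A1 A2)
  fix \<alpha>
  have "(\<lambda>k. (a * D1 \<beta> \<eta> k + b * D2 \<beta> \<eta> k) - (a * D1 \<beta> \<xi> k + b * D2 \<beta> \<xi> k))
      = (\<lambda>k. a * (D1 \<beta> \<eta> k - D1 \<beta> \<xi> k) + b * (D2 \<beta> \<eta> k - D2 \<beta> \<xi> k))" for \<eta>
    by (simp add: fun_eq_iff right_diff_distrib)
  then show "((\<lambda>\<eta>. cnorm \<theta> (delta \<alpha> (\<lambda>k. (a * D1 \<beta> \<eta> k + b * D2 \<beta> \<eta> k)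
      - (a * D1 \<beta> \<xi> k + b * D2 \<beta> \<xi> k)))) \<longlongrightarrow> 0) (at \<xi>)"
    using tendsto_cnorm_delta_lincomb[OF _ _ smooth_familyD(3)[OF D1] smooth_familyD(3)[OF D2]]
    by (simp add: Asm_diff A1 A2)
  fix j
  have "(\<lambda>k. ((a * D1 \<beta> (\<xi> + h *\<^sub>R axis j 1) k + b * D2 \<beta> (\<xi> + h *\<^sub>R axis j 1) k)
              - (a * D1 \<beta> \<xi> k + b * D2 \<beta> \<xi> k)) / complex_of_real h
          - (a * D1 (\<beta> + axis j 1) \<xi> k + b * D2 (\<beta> + axis j 1) \<xi> k))
      = (\<lambda>k. a * ((D1 \<beta> (\<xi> + h *\<^sub>R axis j 1) k - D1 \<beta> \<xi> k) / complex_of_real h - D1 (\<beta> + axis j 1) \<xi> k)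
           + b * ((D2 \<beta> (\<xi> + h *\<^sub>R axis j 1) k - D2 \<beta> \<xi> k) / complex_of_real h - D2 (\<beta> + axis j 1) \<xi> k))"
    for h
    by (simp add: fun_eq_iff diff_divide_distrib add_divide_distrib right_diff_distrib
                  times_divide_eq_right)
  then show "((\<lambda>h. cnorm \<theta> (delta \<alpha> (\<lambda>k. ((a * D1 \<beta> (\<xi> + h *\<^sub>R axis j 1) k + b * D2 \<beta> (\<xi> + h *\<^sub>R axis j 1) k)
              - (a * D1 \<beta> \<xi> k + b * D2 \<beta> \<xi> k)) / complex_of_real h
          - (a * D1 (\<beta> + axis j 1) \<xi> k + b * D2 (\<beta> + axis j 1) \<xi> k)))) \<longlongrightarrow> 0) (at 0)"
    using tendsto_cnorm_delta_lincomb[OF _ _ smooth_familyD(4)[OF D1] smooth_familyD(4)[OF D2]]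
    by (simp add: Asm_diff_quotient A1 A2)
qed

lemma symbol_class_lincomb:
  assumes \<rho>1: "\<rho>1 \<in> symbol_class \<theta> m" and \<rho>2: "\<rho>2 \<in> symbol_class \<theta> m"
  shows "(\<lambda>\<xi> k. a * \<rho>1 \<xi> k + b * \<rho>2 \<xi> k) \<in> symbol_class \<theta> m"
proof -
  obtain D1: "smooth_family \<theta> \<rho>1 (symD \<theta> \<rho>1)"
    and C1: "\<And>\<alpha> \<beta>. \<exists>C. \<forall>\<xi>. cnorm \<theta> (delta \<alpha> (symD \<theta> \<rho>1 \<beta> \<xi>)) \<le> C * (1 + norm \<xi>) powr (m - real (mlen \<beta>))"
    using symbol_classE[OF \<rho>1] by blast
  obtain D2: "smooth_family \<theta> \<rho>2 (symD \<theta> \<rho>2)"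
    and C2: "\<And>\<alpha> \<beta>. \<exists>C. \<forall>\<xi>. cnorm \<theta> (delta \<alpha> (symD \<theta> \<rho>2 \<beta> \<xi>)) \<le> C * (1 + norm \<xi>) powr (m - real (mlen \<beta>))"
    using symbol_classE[OF \<rho>2] by blast
  have "\<exists>C. \<forall>\<xi>. cnorm \<theta> (delta \<alpha> (\<lambda>k. a * symD \<theta> \<rho>1 \<beta> \<xi> k + b * symD \<theta> \<rho>2 \<beta> \<xi> k))
                 \<le> C * (1 + norm \<xi>) powr (m - real (mlen \<beta>))" for \<alpha> \<beta>
  proof -
    obtain c1 c2 where
      c1: "\<And>\<xi>. cnorm \<theta> (delta \<alpha> (symD \<theta> \<rho>1 \<beta> \<xi>)) \<le> c1 * (1 + norm \<xi>) powr (m - real (mlen \<beta>))" and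
      c2: "\<And>\<xi>. cnorm \<theta> (delta \<alpha> (symD \<theta> \<rho>2 \<beta> \<xi>)) \<le> c2 * (1 + norm \<xi>) powr (m - real (mlen \<beta>))"
      using C1 C2 by metis
    have "cnorm \<theta> (delta \<alpha> (\<lambda>k. a * symD \<theta> \<rho>1 \<beta> \<xi> k + b * symD \<theta> \<rho>2 \<beta> \<xi> k))
        \<le> (norm a * c1 + norm b * c2) * (1 + norm \<xi>) powr (m - real (mlen \<beta>))" for \<xi>
    proof -
      have "cnorm \<theta> (delta \<alpha> (\<lambda>k. a * symD \<theta> \<rho>1 \<beta> \<xi> k + b * symD \<theta> \<rho>2 \<beta> \<xi> k))
          \<le> norm a * cnorm \<theta> (delta \<alpha> (symD \<theta> \<rho>1 \<beta> \<xi>)) + norm b * cnorm \<theta> (delta \<alpha> (symD \<theta> \<rho>2 \<beta> \<xi>))"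
        by (intro cnorm_delta_lincomb_le smooth_familyD(2)[OF D1] smooth_familyD(2)[OF D2])
      also have "\<dots> \<le> norm a * (c1 * (1 + norm \<xi>) powr (m - real (mlen \<beta>)))
                      + norm b * (c2 * (1 + norm \<xi>) powr (m - real (mlen \<beta>)))"
        by (intro add_mono mult_left_mono c1 c2) auto
      finally show ?thesis
        by (simp add: algebra_simps)
    qed
    then show ?thesis
      by blast
  qed
  then show ?thesis
    unfolding symbol_class_def using smooth_family_lincomb[OF D1 D2] by blast
qed

section \<open>Sobolev estimate for pseudodifferential operators\<close>

lemma Pop_apply:
  "Pop \<theta> \<rho> u l = infsum (\<lambda>k. u k * \<rho> (ivec k) (l - k) * phase \<theta> (l - k) k) UNIV"
  by (simp add: Pop_def tprod_unit_right mult.assoc)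

lemma sob_weight_eq_square: "sob_weight s u k = (kweight k powr (s / 2) * norm (u k))\<^sup>2"
proof -
  have "(kweight k powr (s / 2))\<^sup>2 = kweight k powr s"
    by (simp add: power2_eq_square powr_add[symmetric])
  then show ?thesis
    by (simp add: sob_weight_kweight power_mult_distrib)
qed

lemma sobnorm_sq: "(sobnorm s u)\<^sup>2 = infsum (sob_weight s u) UNIV"
  by (simp add: sobnorm_def infsum_nonneg sob_weight_def)

lemma sobnorm_nonneg: "sobnorm s u \<ge> 0"
  by (simp add: sobnorm_def infsum_nonneg sob_weight_def)

lemma Pop_kernel_bound:
  fixes \<rho> :: "real ^ ('n::{finite,linorder}) \<Rightarrow> ('n::{finite,linorder}) coeff"
  assumes \<rho>: "\<rho> \<in> symbol_class \<theta> m"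
  shows "norm (u k * \<rho> (ivec k) (l - k) * phase \<theta> (l - k) k) * kweight l powr (s / 2)
    \<le> (real CARD('n) + 1) ^ (N + 1) * 2 powr (\<bar>m\<bar> / 2) * 2 powr (\<bar>s\<bar> / 2) * symb_seminorm \<theta> m N \<rho>
       * ((kweight k powr ((s + m) / 2) * norm (u k)) * kweight (l - k) powr ((\<bar>s\<bar> - real N) / 2))"
proof -
  define c where "c = (real CARD('n) + 1) ^ (N + 1) * symb_seminorm \<theta> m N \<rho>"
  have c: "c \<ge> 0"
    unfolding c_def using symb_seminorm_nonneg[OF \<rho>] by simp
  have decay: "norm (\<rho> (ivec k) (l - k))
      \<le> c * (2 powr (\<bar>m\<bar> / 2) * kweight k powr (m / 2)) * kweight (l - k) powr (- (real N / 2))"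
  proof -
    have "norm (\<rho> (ivec k) (l - k)) \<le> c * (1 + norm (ivec k)) powr m * kweight (l - k) powr (- (real N / 2))"
      using symbol_coeff_decay[OF \<rho>, of "ivec k" "l - k" N] by (simp add: c_def)
    also have "\<dots> \<le> c * (2 powr (\<bar>m\<bar> / 2) * kweight k powr (m / 2)) * kweight (l - k) powr (- (real N / 2))"
      using c by (intro mult_right_mono mult_left_mono one_plus_knorm_powr_le[of k m, unfolded knorm_def]) auto
    finally show ?thesis .
  qed
  have peetre: "kweight l powr (s / 2) \<le> 2 powr (\<bar>s\<bar> / 2) * kweight k powr (s / 2) * kweight (l - k) powr (\<bar>s\<bar> / 2)"
    using peetre_inequality[of l "s / 2" k] by simp
  have "norm (u k * \<rho> (ivec k) (l - k) * phase \<theta> (l - k) k) * kweight l powr (s / 2)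
      = norm (u k) * norm (\<rho> (ivec k) (l - k)) * kweight l powr (s / 2)"
    by (simp add: norm_mult)
  also have "\<dots> \<le> norm (u k) * (c * (2 powr (\<bar>m\<bar> / 2) * kweight k powr (m / 2)) * kweight (l - k) powr (- (real N / 2)))
      * (2 powr (\<bar>s\<bar> / 2) * kweight k powr (s / 2) * kweight (l - k) powr (\<bar>s\<bar> / 2))"
    using c by (intro mult_mono mult_left_mono decay peetre) auto
  also have "\<dots> = c * 2 powr (\<bar>m\<bar> / 2) * 2 powr (\<bar>s\<bar> / 2) * norm (u k)
      * (kweight k powr (m / 2) * kweight k powr (s / 2))
      * (kweight (l - k) powr (- (real N / 2)) * kweight (l - k) powr (\<bar>s\<bar> / 2))"
    by (simp only: mult_ac)
  also have "\<dots> = c * 2 powr (\<bar>m\<bar> / 2) * 2 powr (\<bar>s\<bar> / 2)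
      * ((kweight k powr ((s + m) / 2) * norm (u k)) * kweight (l - k) powr ((\<bar>s\<bar> - real N) / 2))"
    by (simp add: powr_add[symmetric] add_divide_distrib diff_divide_distrib mult_ac add.commute)
  finally show ?thesis
    by (simp add: c_def mult_ac)
qed

lemma kweight_powr_decay_summable:
  assumes "\<bar>s\<bar> + 2 * real CARD('n) \<le> real N"
  shows "(\<lambda>j::int ^ ('n::{finite,linorder}). kweight j powr ((\<bar>s\<bar> - real N) / 2)) summable_on UNIV"
proof -
  have "(\<lambda>j::int ^ ('n::{finite,linorder}). kweight j powr (- ((real N - \<bar>s\<bar>) / 2))) summable_on UNIV"
    using assms by (intro kweight_powr_summable) simp
  then show ?thesis
    by (simp add: minus_divide_left)
qed

lemma Hsob_iff_weighted_l2:
  "u \<in> Hsob s \<longleftrightarrow> (\<lambda>k. (kweight k powr (s / 2) * norm (u k))\<^sup>2) summable_on UNIV"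
  by (simp add: Hsob_def sob_weight_eq_square[abs_def])

lemma Pop_coeff_convolution_bound:
  fixes \<rho> :: "real ^ ('n::{finite,linorder}) \<Rightarrow> ('n::{finite,linorder}) coeff"
    and \<theta> :: "real ^ ('n::{finite,linorder}) ^ ('n::{finite,linorder})" and u :: "('n::{finite,linorder}) coeff"
    and s m :: real and N :: nat
  defines "g \<equiv> \<lambda>j::int ^ ('n::{finite,linorder}). kweight j powr ((\<bar>s\<bar> - real N) / 2)"
    and "v \<equiv> \<lambda>k. kweight k powr ((s + m) / 2) * norm (u k)"
    and "K \<equiv> (real CARD('n) + 1) ^ (N + 1) * 2 powr (\<bar>m\<bar> / 2) * 2 powr (\<bar>s\<bar> / 2)
               * symb_seminorm \<theta> m N \<rho>"
  assumes N: "\<bar>s\<bar> + 2 * real CARD('n) \<le> real N"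
    and \<rho>: "\<rho> \<in> symbol_class \<theta> m" and u: "u \<in> Hsob (s + m)"
  shows "(\<lambda>k. u k * \<rho> (ivec k) (l - k) * phase \<theta> (l - k) k) summable_on UNIV"
    and "kweight l powr (s / 2) * norm (Pop \<theta> \<rho> u l) \<le> K * infsum (\<lambda>k. g (l - k) * v k) UNIV"
proof -
  define F where "F k = u k * \<rho> (ivec k) (l - k) * phase \<theta> (l - k) k" for k
  have conv: "(\<lambda>k. g (l - k) * v k) summable_on UNIV"
    using young_l1_l2(1)[of g v] kweight_powr_decay_summable[OF N] u
    by (simp add: g_def v_def Hsob_iff_weighted_l2)
  have kernel: "norm (F k) \<le> (kweight l powr (- (s / 2)) * K) * (g (l - k) * v k)" for k
    using Pop_kernel_bound[OF \<rho>, where u=u and k=k and l=l and s=s and N=N] kweight_pos[of l]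
    by (simp add: F_def K_def g_def v_def powr_minus field_simps)
  have F: "(\<lambda>k. norm (F k)) summable_on UNIV"
    by (rule summable_on_comparison_test[OF summable_on_cmult_right[OF conv]]) (auto intro: kernel)
  then show "(\<lambda>k. u k * \<rho> (ivec k) (l - k) * phase \<theta> (l - k) k) summable_on UNIV"
    unfolding F_def by (rule abs_summable_summable)
  have "norm (Pop \<theta> \<rho> u l) \<le> infsum (\<lambda>k. norm (F k)) UNIV"
    unfolding Pop_apply F_def[symmetric] by (rule norm_infsum_bound[OF F])
  also have "\<dots> \<le> infsum (\<lambda>k. (kweight l powr (- (s / 2)) * K) * (g (l - k) * v k)) UNIV"
    by (rule infsum_mono[OF F summable_on_cmult_right[OF conv] kernel])
  also have "\<dots> = (kweight l powr (- (s / 2)) * K) * infsum (\<lambda>k. g (l - k) * v k) UNIV"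
    using conv by (rule infsum_cmult_right)
  finally have "kweight l powr (s / 2) * norm (Pop \<theta> \<rho> u l)
      \<le> kweight l powr (s / 2) * ((kweight l powr (- (s / 2)) * K) * infsum (\<lambda>k. g (l - k) * v k) UNIV)"
    by (rule mult_left_mono) simp
  also have "\<dots> = K * infsum (\<lambda>k. g (l - k) * v k) UNIV"
    using kweight_pos[of l] by (simp add: powr_minus)
  finally show "kweight l powr (s / 2) * norm (Pop \<theta> \<rho> u l) \<le> K * infsum (\<lambda>k. g (l - k) * v k) UNIV" .
qed

lemma Pop_sobolev_bound:
  fixes \<rho> :: "real ^ ('n::{finite,linorder}) \<Rightarrow> ('n::{finite,linorder}) coeff"
    and s m :: real and N :: nat
  defines "C \<equiv> (real CARD('n) + 1) ^ (N + 1) * 2 powr (\<bar>m\<bar> / 2) * 2 powr (\<bar>s\<bar> / 2)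
                 * infsum (\<lambda>j::int ^ ('n::{finite,linorder}). kweight j powr ((\<bar>s\<bar> - real N) / 2)) UNIV"
  assumes N: "\<bar>s\<bar> + 2 * real CARD('n) \<le> real N"
    and \<rho>: "\<rho> \<in> symbol_class \<theta> m" and u: "u \<in> Hsob (s + m)"
  shows "Pop \<theta> \<rho> u \<in> Hsob s"
    and "sobnorm s (Pop \<theta> \<rho> u) \<le> C * symb_seminorm \<theta> m N \<rho> * sobnorm (s + m) u"
proof -
  define g where "g = (\<lambda>j::int ^ ('n::{finite,linorder}). kweight j powr ((\<bar>s\<bar> - real N) / 2))"
  define v where "v k = kweight k powr ((s + m) / 2) * norm (u k)" for k
  define K where "K = (real CARD('n) + 1) ^ (N + 1) * 2 powr (\<bar>m\<bar> / 2) * 2 powr (\<bar>s\<bar> / 2)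
                         * symb_seminorm \<theta> m N \<rho>"
  define h where "h l = infsum (\<lambda>k. g (l - k) * v k) UNIV" for l
  have K: "K \<ge> 0"
    unfolding K_def using symb_seminorm_nonneg[OF \<rho>] by simp
  have g: "\<And>j. g j \<ge> 0" "g summable_on UNIV"
    using kweight_powr_decay_summable[OF N] by (simp_all add: g_def)
  have v2: "(\<lambda>k. (v k)\<^sup>2) = sob_weight (s + m) u"
    by (simp add: fun_eq_iff v_def sob_weight_eq_square)
  have v: "\<And>k. v k \<ge> 0" "(\<lambda>k. (v k)\<^sup>2) summable_on UNIV"
    using u unfolding v2 by (auto simp: v_def Hsob_def)
  note young = young_l1_l2[OF g v, folded h_def]
  have weight: "sob_weight s (Pop \<theta> \<rho> u) l \<le> K\<^sup>2 * (h l)\<^sup>2" for l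
    using Pop_coeff_convolution_bound(2)[OF N \<rho> u, of l]
    unfolding sob_weight_eq_square power_mult_distrib[symmetric]
    by (intro power_mono) (simp_all add: g_def v_def h_def K_def)
  have summable: "sob_weight s (Pop \<theta> \<rho> u) summable_on UNIV"
    by (rule summable_on_comparison_test[OF summable_on_cmult_right[OF young(2)] weight])
       (simp add: sob_weight_def)
  then show "Pop \<theta> \<rho> u \<in> Hsob s"
    by (simp add: Hsob_def)
  have "(sobnorm s (Pop \<theta> \<rho> u))\<^sup>2 \<le> infsum (\<lambda>l. K\<^sup>2 * (h l)\<^sup>2) UNIV"
    unfolding sobnorm_sq by (rule infsum_mono[OF summable summable_on_cmult_right[OF young(2)] weight])
  also have "\<dots> \<le> K\<^sup>2 * ((infsum g UNIV)\<^sup>2 * (sobnorm (s + m) u)\<^sup>2)"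
    using young(3) young(2) K by (simp add: infsum_cmult_right mult_left_mono sobnorm_sq v2)
  also have "\<dots> = (K * infsum g UNIV * sobnorm (s + m) u)\<^sup>2"
    by (simp add: power_mult_distrib)
  finally have "(sobnorm s (Pop \<theta> \<rho> u))\<^sup>2 \<le> (K * infsum g UNIV * sobnorm (s + m) u)\<^sup>2" .
  moreover have "0 \<le> K * infsum g UNIV * sobnorm (s + m) u"
    using K g(1) by (simp add: infsum_nonneg sobnorm_nonneg)
  ultimately have "sobnorm s (Pop \<theta> \<rho> u) \<le> K * infsum g UNIV * sobnorm (s + m) u"
    by (rule power2_le_imp_le)
  then show "sobnorm s (Pop \<theta> \<rho> u) \<le> C * symb_seminorm \<theta> m N \<rho> * sobnorm (s + m) u"
    by (simp add: C_def K_def g_def mult_ac)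
qed

section \<open>Uniqueness of the extension\<close>

definition coeff_restrict :: "(int ^ ('n::{finite,linorder})) set \<Rightarrow> ('n::{finite,linorder}) coeff \<Rightarrow> 'n coeff" where
  "coeff_restrict F u = (\<lambda>k. if k \<in> F then u k else 0)"

lemma coeff_restrict_finite_support: "finite F \<Longrightarrow> finite {k. coeff_restrict F u k \<noteq> 0}"
  by (rule finite_subset[of _ F]) (auto simp: coeff_restrict_def)

lemma coeff_restrict_Hsob:
  assumes "finite F \<or> u \<in> Hsob s"
  shows "coeff_restrict F u \<in> Hsob s"
  using assms unfolding Hsob_def mem_Collect_eq
proof (elim disjE)
  assume F: "finite F"
  show "sob_weight s (coeff_restrict F u) summable_on UNIV"
    by (rule finite_nonzero_values_imp_summable_on, rule finite_subset[OF _ F])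
       (auto simp: coeff_restrict_def sob_weight_def)
next
  assume "sob_weight s u summable_on UNIV"
  then show "sob_weight s (coeff_restrict F u) summable_on UNIV"
    by (rule summable_on_comparison_test) (auto simp: coeff_restrict_def sob_weight_def)
qed

text \<open>The coefficients \<open>1\<close> make this match the linearity clause of \<open>is_ext\<close>.\<close>

lemma coeff_restrict_split: "u = (\<lambda>k. 1 * coeff_restrict F u k + 1 * coeff_restrict (- F) u k)"
  by (simp add: fun_eq_iff coeff_restrict_def)

lemma norm_coeff_le_sobnorm:
  assumes "w \<in> Hsob s"
  shows "norm (w l) \<le> kweight l powr (- (s / 2)) * sobnorm s w"
proof -
  have "(kweight l powr (s / 2) * norm (w l))\<^sup>2 \<le> (sobnorm s w)\<^sup>2"
    using single_le_infsum[of "sob_weight s w" l] assms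
    by (simp add: Hsob_def sobnorm_sq sob_weight_eq_square[symmetric] sob_weight_def)
  then have "kweight l powr (s / 2) * norm (w l) \<le> sobnorm s w"
    using sobnorm_nonneg by (rule power2_le_imp_le)
  then show ?thesis
    using kweight_pos[of l] by (simp add: powr_minus field_simps)
qed

lemma sobnorm_restrict_tendsto:
  assumes "u \<in> Hsob s"
  shows "((\<lambda>F. sobnorm s (coeff_restrict (- F) u)) \<longlongrightarrow> 0) (finite_subsets_at_top UNIV)"
proof -
  define S where "S = infsum (sob_weight s u) UNIV"
  have S: "(sob_weight s u has_sum S) UNIV"
    using assms by (simp add: Hsob_def S_def)
  have eq: "sqrt (S - sum (sob_weight s u) F) = sobnorm s (coeff_restrict (- F) u)" if "finite F" for F
  proof -
    have "(sob_weight s (coeff_restrict F u) has_sum sum (sob_weight s u) F) UNIV"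
      using that by (intro has_sum_finite_neutralI) (auto simp: coeff_restrict_def sob_weight_def)
    from has_sum_add[OF S has_sum_uminusI[OF this]]
    moreover have "sob_weight s (coeff_restrict (- F) u)
        = (\<lambda>k. sob_weight s u k + - sob_weight s (coeff_restrict F u) k)"
      by (simp add: fun_eq_iff sob_weight_def coeff_restrict_def)
    ultimately have "(sob_weight s (coeff_restrict (- F) u) has_sum S - sum (sob_weight s u) F) UNIV"
      by simp
    then show ?thesis
      by (simp add: sobnorm_def has_sum_iff)
  qed
  have "((\<lambda>F. sqrt (S - sum (sob_weight s u) F)) \<longlongrightarrow> sqrt (S - S)) (finite_subsets_at_top UNIV)"
    using S unfolding has_sum_def by (intro tendsto_real_sqrt tendsto_diff tendsto_const)
  then have "((\<lambda>F. sqrt (S - sum (sob_weight s u) F)) \<longlongrightarrow> 0) (finite_subsets_at_top UNIV)"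
    by simp
  then show ?thesis
    by (rule Lim_transform_eventually[OF _ eventually_finite_subsets_at_top_weakI]) (rule eq)
qed

lemma is_ext_tendsto_Pop:
  assumes T: "is_ext \<theta> \<rho> s m T" and u: "u \<in> Hsob (s + m)"
  shows "((\<lambda>F. Pop \<theta> \<rho> (coeff_restrict F u) l) \<longlongrightarrow> T u l) (finite_subsets_at_top UNIV)"
proof -
  obtain C where C: "\<And>w. w \<in> Hsob (s + m) \<Longrightarrow> sobnorm s (T w) \<le> C * sobnorm (s + m) w"
    using T unfolding is_ext_def by blast
  have bound: "norm (T u l - Pop \<theta> \<rho> (coeff_restrict F u) l)
      \<le> (kweight l powr (- (s / 2)) * \<bar>C\<bar>) * sobnorm (s + m) (coeff_restrict (- F) u)"
    if F: "finite F" for F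
  proof -
    have restrict: "coeff_restrict F u \<in> Hsob (s + m)" "coeff_restrict (- F) u \<in> Hsob (s + m)"
      using F u by (auto intro: coeff_restrict_Hsob)
    have "T u = (\<lambda>k. 1 * T (coeff_restrict F u) k + 1 * T (coeff_restrict (- F) u) k)"
      using T restrict unfolding is_ext_def by (subst coeff_restrict_split[of u F]) blast
    moreover have "T (coeff_restrict F u) = Pop \<theta> \<rho> (coeff_restrict F u)"
      using T Asm_finite_support[OF coeff_restrict_finite_support[OF F]] unfolding is_ext_def by blast
    ultimately have "norm (T u l - Pop \<theta> \<rho> (coeff_restrict F u) l) = norm (T (coeff_restrict (- F) u) l)"
      by simp
    also have "\<dots> \<le> kweight l powr (- (s / 2)) * sobnorm s (T (coeff_restrict (- F) u))"
      using T restrict(2) unfolding is_ext_def by (blast intro: norm_coeff_le_sobnorm)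
    also have "\<dots> \<le> kweight l powr (- (s / 2)) * (\<bar>C\<bar> * sobnorm (s + m) (coeff_restrict (- F) u))"
      using order_trans[OF C[OF restrict(2)] mult_right_mono[OF abs_ge_self sobnorm_nonneg]]
      by (intro mult_left_mono) simp_all
    finally show ?thesis
      by (simp add: mult.assoc)
  qed
  have "((\<lambda>F. T u l - Pop \<theta> \<rho> (coeff_restrict F u) l) \<longlongrightarrow> 0) (finite_subsets_at_top UNIV)"
    by (rule Lim_null_comparison[OF eventually_finite_subsets_at_top_weakI])
       (erule bound, rule tendsto_mult_right_zero[OF sobnorm_restrict_tendsto[OF u]])
  from tendsto_diff[OF tendsto_const[of "T u l"] this] show ?thesis
    by simp
qed

lemma Pop_is_ext:
  fixes \<rho> :: "real ^ ('n::{finite,linorder}) \<Rightarrow> ('n::{finite,linorder}) coeff"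
  assumes \<rho>: "\<rho> \<in> symbol_class \<theta> m"
  shows "is_ext \<theta> \<rho> s m (Pop \<theta> \<rho>)"
proof -
  obtain N :: nat where N: "\<bar>s\<bar> + 2 * real CARD('n) \<le> real N"
    using real_arch_simple by blast
  have "Pop \<theta> \<rho> (\<lambda>k. a * u k + b * v k) = (\<lambda>l. a * Pop \<theta> \<rho> u l + b * Pop \<theta> \<rho> v l)"
    if "u \<in> Hsob (s + m)" "v \<in> Hsob (s + m)" for u v a b
  proof
    fix l
    show "Pop \<theta> \<rho> (\<lambda>k. a * u k + b * v k) l = a * Pop \<theta> \<rho> u l + b * Pop \<theta> \<rho> v l"
      unfolding Pop_apply
      using Pop_coeff_convolution_bound(1)[OF N \<rho> that(1)] Pop_coeff_convolution_bound(1)[OF N \<rho> that(2)]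
      by (simp add: distrib_right mult.assoc infsum_add summable_on_cmult_right infsum_cmult_right)
  qed
  then show ?thesis
    unfolding is_ext_def using Pop_sobolev_bound[OF N \<rho>] by blast
qed

lemma is_ext_unique:
  assumes "is_ext \<theta> \<rho> s m T" and "is_ext \<theta> \<rho> s m T'" and "u \<in> Hsob (s + m)"
  shows "T' u = T u"
proof
  fix l
  show "T' u l = T u l"
    by (rule tendsto_unique[OF _ is_ext_tendsto_Pop[OF assms(2,3)] is_ext_tendsto_Pop[OF assms(1,3)]])
       simp
qed

lemma Pop_symbol_lincomb:
  assumes "finite {k. u k \<noteq> 0}"
  shows "Pop \<theta> (\<lambda>\<xi> k. a * \<rho>1 \<xi> k + b * \<rho>2 \<xi> k) u l = a * Pop \<theta> \<rho>1 u l + b * Pop \<theta> \<rho>2 u l"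
proof -
  have summable: "(\<lambda>k. u k * X k) summable_on UNIV" for X
    by (rule finite_nonzero_values_imp_summable_on, rule finite_subset[OF _ assms]) auto
  show ?thesis
    unfolding Pop_apply using summable[of "\<lambda>k. \<rho>1 (ivec k) (l - k) * phase \<theta> (l - k) k"]
                              summable[of "\<lambda>k. \<rho>2 (ivec k) (l - k) * phase \<theta> (l - k) k"]
    by (simp add: distrib_left distrib_right mult.assoc mult.left_commute[of _ a] mult.left_commute[of _ b]
                  infsum_add summable_on_cmult_right infsum_cmult_right)
qed

lemma is_ext_lincomb:
  assumes T1: "is_ext \<theta> \<rho>1 s m T1" and T2: "is_ext \<theta> \<rho>2 s m T2"
    and T: "is_ext \<theta> (\<lambda>\<xi> k. a * \<rho>1 \<xi> k + b * \<rho>2 \<xi> k) s m T" and u: "u \<in> Hsob (s + m)"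
  shows "T u = (\<lambda>k. a * T1 u k + b * T2 u k)"
proof
  fix l
  have "((\<lambda>F. a * Pop \<theta> \<rho>1 (coeff_restrict F u) l + b * Pop \<theta> \<rho>2 (coeff_restrict F u) l)
          \<longlongrightarrow> a * T1 u l + b * T2 u l) (finite_subsets_at_top UNIV)"
    by (intro tendsto_intros is_ext_tendsto_Pop[OF T1 u] is_ext_tendsto_Pop[OF T2 u])
  then have lim: "((\<lambda>F. Pop \<theta> (\<lambda>\<xi> k. a * \<rho>1 \<xi> k + b * \<rho>2 \<xi> k) (coeff_restrict F u) l)
          \<longlongrightarrow> a * T1 u l + b * T2 u l) (finite_subsets_at_top UNIV)"
    by (rule Lim_transform_eventually[OF _ eventually_finite_subsets_at_top_weakI])
       (simp add: Pop_symbol_lincomb coeff_restrict_finite_support)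
  show "T u l = a * T1 u l + b * T2 u l"
    by (rule tendsto_unique[OF _ is_ext_tendsto_Pop[OF T u] lim]) simp
qed

theorem proposition10p4:
  fixes \<theta> :: "real ^ ('n::{finite,linorder}) ^ ('n::{finite,linorder})" and m :: real
    and \<rho> :: "real ^ ('n::{finite,linorder}) \<Rightarrow> ('n::{finite,linorder}) coeff"
  assumes "CARD('n) \<ge> 2"
    and "antisym_mat \<theta>"
    and "\<rho> \<in> symbol_class \<theta> m"
  shows "(\<forall>s::real. \<exists>T. is_ext \<theta> \<rho> s m T \<and>
            (\<forall>T'. is_ext \<theta> \<rho> s m T' \<longrightarrow> (\<forall>u \<in> Hsob (s + m). T' u = T u)))
       \<and> (\<forall>\<rho>1 \<in> symbol_class \<theta> m. \<forall>\<rho>2 \<in> symbol_class \<theta> m. \<forall>a b :: complex.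
            (\<lambda>\<xi> k. a * \<rho>1 \<xi> k + b * \<rho>2 \<xi> k) \<in> symbol_class \<theta> m \<and>
            (\<forall>s T1 T2 T. is_ext \<theta> \<rho>1 s m T1 \<and> is_ext \<theta> \<rho>2 s m T2
                 \<and> is_ext \<theta> (\<lambda>\<xi> k. a * \<rho>1 \<xi> k + b * \<rho>2 \<xi> k) s m T \<longrightarrow>
               (\<forall>u \<in> Hsob (s + m). T u = (\<lambda>k. a * T1 u k + b * T2 u k))))
       \<and> (\<forall>s::real. \<exists>N C. \<forall>\<rho>' \<in> symbol_class \<theta> m. \<forall>T. is_ext \<theta> \<rho>' s m T \<longrightarrow>
            (\<forall>u \<in> Hsob (s + m). sobnorm s (T u) \<le> C * symb_seminorm \<theta> m N \<rho>' * sobnorm (s + m) u))"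
proof (intro conjI allI ballI impI)
  fix s
  show "\<exists>T. is_ext \<theta> \<rho> s m T \<and> (\<forall>T'. is_ext \<theta> \<rho> s m T' \<longrightarrow> (\<forall>u \<in> Hsob (s + m). T' u = T u))"
    using Pop_is_ext[OF assms(3)] is_ext_unique by blast
next
  fix \<rho>1 \<rho>2 a b
  assume "\<rho>1 \<in> symbol_class \<theta> m" and "\<rho>2 \<in> symbol_class \<theta> m"
  then show "(\<lambda>\<xi> k. a * \<rho>1 \<xi> k + b * \<rho>2 \<xi> k) \<in> symbol_class \<theta> m"
    by (rule symbol_class_lincomb)
next
  fix \<rho>1 \<rho>2 a b s T1 T2 T and u :: "('n::{finite,linorder}) coeff"
  assume "is_ext \<theta> \<rho>1 s m T1 \<and> is_ext \<theta> \<rho>2 s m T2 \<and> is_ext \<theta> (\<lambda>\<xi> k. a * \<rho>1 \<xi> k + b * \<rho>2 \<xi> k) s m T"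
    and "u \<in> Hsob (s + m)"
  then show "T u = (\<lambda>k. a * T1 u k + b * T2 u k)"
    using is_ext_lincomb by blast
next
  fix s :: real
  obtain N :: nat where N: "\<bar>s\<bar> + 2 * real CARD('n) \<le> real N"
    using real_arch_simple by blast
  show "\<exists>N C. \<forall>\<rho>' \<in> symbol_class \<theta> m. \<forall>T. is_ext \<theta> \<rho>' s m T \<longrightarrow>
          (\<forall>u \<in> Hsob (s + m). sobnorm s (T u) \<le> C * symb_seminorm \<theta> m N \<rho>' * sobnorm (s + m) u)"
    using Pop_sobolev_bound(2)[OF N] Pop_is_ext is_ext_unique by metis
qed

end
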